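(* Let $q\ge2$, $T=\mathbb T_q$ the homogeneous tree of degree $q+1$ with root $o$ and reference end $\varpi$, $\alpha\in(0,1)$, and $P$ the affine nearest-neighbour random walk with $p(x,y)=\alpha/q$ if $\mathrm{hor}(y)=\mathrm{hor}(x)+1$ and $p(x,y)=1-\alpha$ if $\mathrm{hor}(y)=\mathrm{hor}(x)-1$. Put $\rho=2\sqrt{\alpha(1-\alpha)}$ and $\lambda_0=\frac{q+1}{2\sqrt q}\rho$. Let $\lambda\in\mathbb C\setminus[-\rho,\rho]$ with $\lambda\ne\lambda_0$, and $\xi\in\partial T$. Let $\nu^\xi$ and $\tilde\nu^\xi$ be the (unique) strong distributions on $\partial T$ such that for all $x\in T$ $$\tilde K(x,\xi|\lambda)=\int_{\partial T}K(x,\cdot|\lambda)\,d\nu^\xi,\qquad K(x,\xi|\lambda)=\int_{\partial T}\tilde K(x,\cdot|\lambda)\,d\tilde\nu^\xi.$$ Then $\nu^\xi$ extends to a complex $\sigma$-additive Borel measure on $\partial T$, while $\tilde\nu^\xi$ does not. If in particular $\lambda>\rho$ is real, then $\nu^\xi$ is a Borel probability measure whose support is all of $\partial T$, so that $\tilde K(\cdot,\xi|\lambda)$ is not minimal in $\mathcal H_o(\lambda)$.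
   Context: Ends, $\partial T$, geodesics $\pi(x,y)$, cones $T_x$, arcs $\partial T_x$, predecessor $x^-$ and confluent $v\wedge w$ (w.r.t. $o$) as usual; $\partial T$ carries the topology generated by the arcs $\partial T_x$. $\mathrm{hor}(x,\xi)=d(x,x\wedge\xi)-d(o,x\wedge\xi)$, $\mathrm{hor}(x)=\mathrm{hor}(x,\varpi)$. Square roots: principal branch on $\mathbb C\setminus(-\infty,0]$. $F_-(\lambda)=\frac{\lambda}{2\alpha}(1-\sqrt{1-4\alpha(1-\alpha)/\lambda^2})$, $\tilde F_-(\lambda)=\frac{\lambda}{2\alpha}(1+\sqrt{1-4\alpha(1-\alpha)/\lambda^2})$, $F_+=\frac{\alpha}{(1-\alpha)q}F_-$, $\tilde F_+=\frac{\alpha}{(1-\alpha)q}\tilde F_-$. Edge weights $f(x,y)=F_\pm(\lambda)$, $\tilde f(x,y)=\tilde F_\pm(\lambda)$ for $x\sim y$ with $\mathrm{hor}(y)=\mathrm{hor}(x)\pm1$, extended by $1$ on the diagonal and multiplicatively along geodesics; $K(x,w|\lambda)=f(x,x\wedge w)/f(o,x\wedge w)$, $\tilde K(x,w|\lambda)=\tilde f(x,x\wedge w)/\tilde f(o,x\wedge w)$. A distribution is a complex finitely additive set function on the algebra of finite disjoint unions of sets $\partial T_x\setminus\bigcup_{y\in S}\partial T_y$ ($S$ finite, $y^-=x$), integrated against locally constant functions in the obvious way; strong means $\sum_{y:y^-=x}\nu(\partial T_y)$ converges absolutely for each $x$. "Extends to a $\sigma$-additive Borel measure" means there is a complex Borel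 measure on $\partial T$ agreeing with the distribution on that algebra. $\mathcal H_o(\lambda)=\{h:T\to(0,\infty)\mid h(o)=1,\ Ph=\lambda h\}$; $h$ is minimal if it is an extremal point of this convex set. *)

theory Defs
  imports "HOL-Probability.Probability"
begin

text \<open>Vertices: reduced words over the alphabet {0..q} (no two consecutive equal letters);
  the root o is the empty word, the word x is the geodesic from o, the predecessor of x
  is butlast x. This is the Cayley graph of the free product of q+1 copies of Z/2,
  i.e. the homogeneous tree of degree q+1.\<close>

definition verts :: "nat \<Rightarrow> nat list set" where
  "verts q = {xs. (\<forall>i<length xs. xs ! i \<le> q) \<and> (\<forall>i. Suc i < length xs \<longrightarrow> xs ! Suc i \<noteq> xs ! i)}"

text \<open>Ends: infinite reduced words = geodesic rays from o.\<close>
definition ends :: "nat \<Rightarrow> (nat \<Rightarrow> nat) set" where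
  "ends q = {\<xi>. \<forall>n. \<xi> n \<le> q \<and> \<xi> (Suc n) \<noteq> \<xi> n}"

definition pref :: "(nat \<Rightarrow> nat) \<Rightarrow> nat \<Rightarrow> nat list" where
  "pref \<xi> n = map \<xi> [0..<n]"

definition adj :: "nat list \<Rightarrow> nat list \<Rightarrow> bool" where
  "adj x y \<longleftrightarrow> (\<exists>a. y = x @ [a]) \<or> (\<exists>a. x = y @ [a])"

definition nbrs :: "nat \<Rightarrow> nat list \<Rightarrow> nat list set" where
  "nbrs q x = {y \<in> verts q. adj x y}"

definition children :: "nat \<Rightarrow> nat list \<Rightarrow> nat list set" where
  "children q x = {y \<in> verts q. \<exists>a. y = x @ [a]}"

text \<open>Confluent (w.r.t. o) = longest common prefix.\<close>
fun lcp :: "nat list \<Rightarrow> nat list \<Rightarrow> nat list" where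
  "lcp (a # xs) (b # ys) = (if a = b then a # lcp xs ys else [])"
| "lcp _ _ = []"

definition confE :: "nat list \<Rightarrow> (nat \<Rightarrow> nat) \<Rightarrow> nat list" where
  "confE x \<xi> = lcp x (pref \<xi> (length x))"

text \<open>hor(x,xi) = d(x, x /\ xi) - d(o, x /\ xi).\<close>
definition hor :: "nat list \<Rightarrow> (nat \<Rightarrow> nat) \<Rightarrow> int" where
  "hor x \<xi> = int (length x) - 2 * int (length (confE x \<xi>))"

definition tarc :: "nat \<Rightarrow> nat list \<Rightarrow> (nat \<Rightarrow> nat) set" where
  "tarc q x = {\<xi> \<in> ends q. pref \<xi> (length x) = x}"

definition bdry_top :: "nat \<Rightarrow> (nat \<Rightarrow> nat) topology" where
  "bdry_top q = topology_generated_by (tarc q ` verts q)"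

definition bdry_borel :: "nat \<Rightarrow> (nat \<Rightarrow> nat) measure" where
  "bdry_borel q = sigma (topspace (bdry_top q)) {U. openin (bdry_top q) U}"

definition trans_prob :: "nat \<Rightarrow> real \<Rightarrow> (nat \<Rightarrow> nat) \<Rightarrow> nat list \<Rightarrow> nat list \<Rightarrow> real" where
  "trans_prob q \<alpha> \<omega> x y =
     (if adj x y \<and> hor y \<omega> = hor x \<omega> + 1 then \<alpha> / real q
      else if adj x y \<and> hor y \<omega> = hor x \<omega> - 1 then 1 - \<alpha> else 0)"

definition Fm :: "real \<Rightarrow> complex \<Rightarrow> complex" where
  "Fm \<alpha> lam = lam / (2 * of_real \<alpha>) * (1 - csqrt (1 - 4 * of_real (\<alpha> * (1 - \<alpha>)) / lam\<^sup>2))"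

definition Fmt :: "real \<Rightarrow> complex \<Rightarrow> complex" where
  "Fmt \<alpha> lam = lam / (2 * of_real \<alpha>) * (1 + csqrt (1 - 4 * of_real (\<alpha> * (1 - \<alpha>)) / lam\<^sup>2))"

definition Fp :: "nat \<Rightarrow> real \<Rightarrow> complex \<Rightarrow> complex" where
  "Fp q \<alpha> lam = of_real (\<alpha> / ((1 - \<alpha>) * real q)) * Fm \<alpha> lam"

definition Fpt :: "nat \<Rightarrow> real \<Rightarrow> complex \<Rightarrow> complex" where
  "Fpt q \<alpha> lam = of_real (\<alpha> / ((1 - \<alpha>) * real q)) * Fmt \<alpha> lam"

definition edge_w :: "complex \<Rightarrow> complex \<Rightarrow> (nat \<Rightarrow> nat) \<Rightarrow> nat list \<Rightarrow> nat list \<Rightarrow> complex" where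
  "edge_w Fplus Fminus \<omega> u v = (if hor v \<omega> = hor u \<omega> + 1 then Fplus else Fminus)"

text \<open>Multiplicative extension along the geodesic from x up to x /\ y and down to y
  (empty product = 1 on the diagonal).\<close>
definition geo_w :: "(nat list \<Rightarrow> nat list \<Rightarrow> complex) \<Rightarrow> nat list \<Rightarrow> nat list \<Rightarrow> complex" where
  "geo_w W x y = (let c = lcp x y in
      (\<Prod>k\<in>{length c..<length x}. W (take (Suc k) x) (take k x)) *
      (\<Prod>k\<in>{length c..<length y}. W (take k y) (take (Suc k) y)))"

definition fw :: "nat \<Rightarrow> real \<Rightarrow> (nat \<Rightarrow> nat) \<Rightarrow> complex \<Rightarrow> nat list \<Rightarrow> nat list \<Rightarrow> complex" where
  "fw q \<alpha> \<omega> lam = geo_w (edge_w (Fp q \<alpha> lam) (Fm \<alpha> lam) \<omega>)"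

definition fwt :: "nat \<Rightarrow> real \<Rightarrow> (nat \<Rightarrow> nat) \<Rightarrow> complex \<Rightarrow> nat list \<Rightarrow> nat list \<Rightarrow> complex" where
  "fwt q \<alpha> \<omega> lam = geo_w (edge_w (Fpt q \<alpha> lam) (Fmt \<alpha> lam) \<omega>)"

definition Kker :: "nat \<Rightarrow> real \<Rightarrow> (nat \<Rightarrow> nat) \<Rightarrow> complex \<Rightarrow> nat list \<Rightarrow> (nat \<Rightarrow> nat) \<Rightarrow> complex" where
  "Kker q \<alpha> \<omega> lam x w = fw q \<alpha> \<omega> lam x (confE x w) / fw q \<alpha> \<omega> lam [] (confE x w)"

definition Kkert :: "nat \<Rightarrow> real \<Rightarrow> (nat \<Rightarrow> nat) \<Rightarrow> complex \<Rightarrow> nat list \<Rightarrow> (nat \<Rightarrow> nat) \<Rightarrow> complex" where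
  "Kkert q \<alpha> \<omega> lam x w = fwt q \<alpha> \<omega> lam x (confE x w) / fwt q \<alpha> \<omega> lam [] (confE x w)"

definition basic_sets :: "nat \<Rightarrow> (nat \<Rightarrow> nat) set set" where
  "basic_sets q = {tarc q x - \<Union> (tarc q ` S) | x S. x \<in> verts q \<and> finite S \<and> S \<subseteq> children q x}"

definition bdry_alg :: "nat \<Rightarrow> (nat \<Rightarrow> nat) set set" where
  "bdry_alg q = {\<Union> F | F. finite F \<and> F \<subseteq> basic_sets q \<and> disjoint F}"

definition distribution :: "nat \<Rightarrow> ((nat \<Rightarrow> nat) set \<Rightarrow> complex) \<Rightarrow> bool" where
  "distribution q \<nu> \<longleftrightarrow>
     (\<forall>A\<in>bdry_alg q. \<forall>B\<in>bdry_alg q. A \<inter> B = {} \<longrightarrow> \<nu> (A \<union> B) = \<nu> A + \<nu> B)"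

definition strong_distribution :: "nat \<Rightarrow> ((nat \<Rightarrow> nat) set \<Rightarrow> complex) \<Rightarrow> bool" where
  "strong_distribution q \<nu> \<longleftrightarrow> distribution q \<nu> \<and>
     (\<forall>x\<in>verts q. (\<lambda>y. norm (\<nu> (tarc q y))) summable_on children q x)"

definition tlevel :: "nat \<Rightarrow> nat \<Rightarrow> nat list set" where
  "tlevel q N = {y \<in> verts q. length y = N}"

definition dist_integral :: "nat \<Rightarrow> ((nat \<Rightarrow> nat) set \<Rightarrow> complex) \<Rightarrow> ((nat \<Rightarrow> nat) \<Rightarrow> complex) \<Rightarrow> complex" where
  "dist_integral q \<nu> f =
     (let N = (LEAST N. \<forall>y\<in>tlevel q N. \<forall>\<xi>\<in>tarc q y. \<forall>\<eta>\<in>tarc q y. f \<xi> = f \<eta>)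
      in \<Sum>y\<in>tlevel q N. f (SOME \<xi>. \<xi> \<in> tarc q y) * \<nu> (tarc q y))"

definition complex_measure_on :: "'a measure \<Rightarrow> ('a set \<Rightarrow> complex) \<Rightarrow> bool" where
  "complex_measure_on M \<mu> \<longleftrightarrow> \<mu> {} = 0 \<and>
     (\<forall>A :: nat \<Rightarrow> 'a set. range A \<subseteq> sets M \<longrightarrow> disjoint_family A \<longrightarrow>
        (\<lambda>n. \<mu> (A n)) sums \<mu> (\<Union>n. A n))"

definition extends_to_borel :: "nat \<Rightarrow> ((nat \<Rightarrow> nat) set \<Rightarrow> complex) \<Rightarrow> bool" where
  "extends_to_borel q \<nu> \<longleftrightarrow>
     (\<exists>\<mu>. complex_measure_on (bdry_borel q) \<mu> \<and> (\<forall>A\<in>bdry_alg q. \<mu> A = \<nu> A))"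

definition Hset :: "nat \<Rightarrow> real \<Rightarrow> (nat \<Rightarrow> nat) \<Rightarrow> real \<Rightarrow> (nat list \<Rightarrow> real) set" where
  "Hset q \<alpha> \<omega> lam = {h. (\<forall>x\<in>verts q. h x > 0) \<and> (\<forall>x. x \<notin> verts q \<longrightarrow> h x = 0) \<and> h [] = 1 \<and>
      (\<forall>x\<in>verts q. (\<Sum>y\<in>nbrs q x. trans_prob q \<alpha> \<omega> x y * h y) = lam * h x)}"

definition minimal_in :: "(nat list \<Rightarrow> real) set \<Rightarrow> (nat list \<Rightarrow> real) \<Rightarrow> bool" where
  "minimal_in H h \<longleftrightarrow> h \<in> H \<and>
     (\<forall>h1\<in>H. \<forall>h2\<in>H. \<forall>t::real. 0 < t \<and> t < 1 \<and> h = (\<lambda>x. t * h1 x + (1 - t) * h2 x) \<longrightarrow> h1 = h2)"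

end

theory Submission
  imports Defs
begin

text \<open>
  The representation hypotheses determine both distributions on arcs. Write \<open>K\<^sub>W\<close> for the kernel
  of edge weights \<open>W\<close>, so that \<open>\<nu>\<close> represents \<open>K\<^sub>W\<^sub>'\<close> by \<open>K\<^sub>W\<close> with \<open>W = f\<close>, \<open>W' = f~\<close>, and \<open>\<nu>~\<close>
  does the same with the roles exchanged. Comparing \<open>\<integral> K\<^sub>W(x, \<cdot>) d\<nu>\<close> at a vertex and at its
  predecessor isolates the mass of a single arc, and with \<open>r = F\<^sub>- / F~\<^sub>-\<close> one finds
  \<open>\<nu>(T\<^sub>x) = (q - 1) r\<^sup>n / (q - r)\<close> for the vertex \<open>x\<close> with \<open>|x| = n \<ge> 1\<close> on the ray to \<open>\<xi>\<close>, and
  \<open>\<nu>(T\<^sub>x) = (1 - r) / (q - r) \<cdot> r\<^sup>k q\<^sup>k\<^sup>+\<^sup>1\<^sup>-\<^sup>n\<close> for a vertex \<open>x\<close> with \<open>|x| = n\<close> off that ray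
  whose confluent with \<open>\<xi>\<close> is \<open>\<xi>\<^sub>k\<close>.

  Since \<open>|F\<^sub>-| < |F~\<^sub>-|\<close>, \<open>|r| < 1\<close>. The masses above are then those of the complex measure with
  density \<open>(1 - r) / (q - r) \<cdot> (q + 1) (q r)\<^sup>k\<close> with respect to the uniform measure on the ends
  whose confluent with \<open>\<xi>\<close> is \<open>\<xi>\<^sub>k\<close>; that set has uniform measure \<open>O(q\<^sup>-\<^sup>k)\<close>, so the
  series converges absolutely. For \<open>\<nu>~\<close> the ratio is inverted, \<open>|r| > 1\<close>, and the arcs branching
  off the ray at its successive vertices are disjoint while their masses grow like \<open>|r|\<^sup>k\<close>,
  contradicting \<open>\<sigma>\<close>-additivity.

  For real \<open>\<lambda> > \<rho>\<close> all the masses are positive, so \<open>\<nu>\<close> is a probability measure charging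
  every arc. Splitting \<open>K~(x, \<xi>) = \<integral> K(x, \<cdot>) d\<nu>\<close> into the integrals over the arc of the first
  vertex \<open>\<xi>\<^sub>1\<close> of \<open>\<xi>\<close> and over its complement exhibits \<open>K~(\<cdot>, \<xi>)\<close> as a proper convex
  combination of two normalised positive \<open>\<lambda>\<close>-harmonic functions, which differ at \<open>\<xi>\<^sub>1\<close>.
\<close>

lemma le_length_lcp_iff: "n \<le> length (lcp x y) \<longleftrightarrow> n \<le> length x \<and> n \<le> length y \<and> take n x = take n y"
proof (induction x y arbitrary: n rule: lcp.induct)
  case (1 a xs b ys)
  then show ?case by (cases n) auto
qed auto

lemma lcp_eq_take_left: "lcp x y = take (length (lcp x y)) x"
  by (induction x y rule: lcp.induct) auto

lemma lcp_eq_take_right: "lcp x y = take (length (lcp x y)) y"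
  by (induction x y rule: lcp.induct) auto

lemma length_lcp_le_left: "length (lcp x y) \<le> length x" using le_length_lcp_iff by blast

lemma lcp_eqI: "length c \<le> length x \<Longrightarrow> length c \<le> length y \<Longrightarrow> take (length c) x = c \<Longrightarrow>
   take (length c) y = c \<Longrightarrow> (length c = length x \<or> length c = length y \<or> x ! length c \<noteq> y ! length c)
   \<Longrightarrow> lcp x y = c"
proof -
  assume a: "length c \<le> length x" "length c \<le> length y" "take (length c) x = c"
     "take (length c) y = c" "length c = length x \<or> length c = length y \<or> x ! length c \<noteq> y ! length c"
  have le: "length c \<le> length (lcp x y)" using a le_length_lcp_iff by auto
  have ge: "length (lcp x y) \<le> length c"
  proof (rule ccontr)
    assume "\<not> ?thesis"
    then have "Suc (length c) \<le> length (lcp x y)" by simp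
    then have s: "Suc (length c) \<le> length x" "Suc (length c) \<le> length y"
      "take (Suc (length c)) x = take (Suc (length c)) y" using le_length_lcp_iff by blast+
    then have "x ! length c = y ! length c"
      by (metis lessI nth_take Suc_le_eq)
    with a s show False by auto
  qed
  show ?thesis using le ge lcp_eq_take_left[of x y] a(3) by (metis le_antisym)
qed

lemma lcp_self[simp]: "lcp x x = x"
  by (induction x) auto

lemma length_le_if_take_eq: "take (length c) x = c \<Longrightarrow> length c \<le> length x"
proof -
  assume "take (length c) x = c"
  then have "length (take (length c) x) = length c" by simp
  then have "min (length c) (length x) = length c" by simp
  then show ?thesis by linarith
qed

lemma lcp_eq_prefix_right: "take (length c) x = c \<Longrightarrow> lcp x c = c"
  using length_le_if_take_eq[of c x] by (intro lcp_eqI) auto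

lemma lcp_eq_prefix_left: "take (length c) x = c \<Longrightarrow> lcp c x = c"
  using length_le_if_take_eq[of c x] by (intro lcp_eqI) auto

lemma take_length_lcp: "take (length (lcp x y)) x = lcp x y"
  by (metis lcp_eq_take_left)

lemma length_lcp_less: "length x = length y \<Longrightarrow> x \<noteq> y \<Longrightarrow> length (lcp x y) < length x"
  by (metis le_length_lcp_iff le_neq_implies_less order_refl take_all length_lcp_le_left)

lemma lcp_snoc: "length p = length w \<Longrightarrow>
   lcp (p @ [b]) (w @ [c]) = (if p = w \<and> b = c then p @ [b] else lcp p w)"
  by (induction p w rule: list_induct2) auto

lemma length_pref[simp]: "length (pref \<xi> n) = n" by (simp add: pref_def)
lemma pref_Suc: "pref \<xi> (Suc n) = pref \<xi> n @ [\<xi> n]" by (simp add: pref_def)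
lemma take_pref: "take k (pref \<xi> n) = pref \<xi> (min k n)"
  by (cases "k \<le> n") (simp_all add: pref_def take_map min_def take_upt)
lemma nth_pref: "i < n \<Longrightarrow> pref \<xi> n ! i = \<xi> i" by (simp add: pref_def)
lemma pref_0[simp]: "pref \<xi> 0 = []" by (simp add: pref_def)

lemma pref_in_verts: "\<xi> \<in> ends q \<Longrightarrow> pref \<xi> n \<in> verts q"
  by (auto simp: verts_def ends_def nth_pref)

lemma take_in_verts: "x \<in> verts q \<Longrightarrow> take k x \<in> verts q"
  by (auto simp: verts_def)

lemma butlast_in_verts: "x \<in> verts q \<Longrightarrow> butlast x \<in> verts q"
  by (metis butlast_conv_take take_in_verts)

lemma Nil_in_verts[simp]: "[] \<in> verts q" by (simp add: verts_def)

lemma snoc_in_verts_iff: "p @ [b] \<in> verts q \<longleftrightarrow> p \<in> verts q \<and> b \<le> q \<and> (p = [] \<or> b \<noteq> last p)"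
proof
  assume a: "p @ [b] \<in> verts q"
  have "p \<in> verts q" using take_in_verts[OF a, of "length p"] by simp
  moreover have "b \<le> q" using a unfolding verts_def
    by (metis (no_types, lifting) length_append_singleton lessI mem_Collect_eq nth_append_length)
  moreover have "p = [] \<or> b \<noteq> last p"
  proof (cases "p = []")
    case False
    then obtain i where i: "Suc i = length p" by (metis length_greater_0_conv Suc_pred)
    have "Suc i < length (p@[b])" using i by simp
    then have "(p@[b]) ! Suc i \<noteq> (p@[b]) ! i" using a unfolding verts_def by blast
    moreover have "(p@[b]) ! Suc i = b" using i by (metis nth_append_length)
    moreover have "(p@[b]) ! i = last p" using i False
      by (metis diff_Suc_1 last_conv_nth lessI nth_append)
    ultimately show ?thesis by auto
  qed simp
  ultimately show "p \<in> verts q \<and> b \<le> q \<and> (p = [] \<or> b \<noteq> last p)" by blast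
next
  assume a: "p \<in> verts q \<and> b \<le> q \<and> (p = [] \<or> b \<noteq> last p)"
  have 1: "\<forall>i<length (p@[b]). (p@[b]) ! i \<le> q"
  proof (intro allI impI)
    fix i assume "i < length (p@[b])"
    then show "(p@[b]) ! i \<le> q" using a unfolding verts_def
      by (cases "i < length p") (auto simp: nth_append)
  qed
  have 2: "\<forall>i. Suc i < length (p@[b]) \<longrightarrow> (p@[b]) ! Suc i \<noteq> (p@[b]) ! i"
  proof (intro allI impI)
    fix i assume i: "Suc i < length (p@[b])"
    show "(p@[b]) ! Suc i \<noteq> (p@[b]) ! i"
    proof (cases "Suc i < length p")
      case True then show ?thesis using a unfolding verts_def by (auto simp: nth_append)
    next
      case False
      then have "Suc i = length p" using i by simp
      moreover have "last p = p ! i" using \<open>Suc i = length p\<close>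
        by (metis diff_Suc_1 last_conv_nth list.size(3) nat.distinct(1))
      ultimately show ?thesis using a by (auto simp: nth_append)
    qed
  qed
  show "p @ [b] \<in> verts q" using 1 2 unfolding verts_def by blast
qed

lemma mem_tarc_iff: "\<eta> \<in> tarc q y \<longleftrightarrow> \<eta> \<in> ends q \<and> pref \<eta> (length y) = y"
  by (simp add: tarc_def)

lemma tarc_Nil: "tarc q [] = ends q" by (auto simp: tarc_def)

lemma tarc_take: "\<eta> \<in> tarc q y \<Longrightarrow> k \<le> length y \<Longrightarrow> \<eta> \<in> tarc q (take k y)"
  by (auto simp: mem_tarc_iff take_pref min_def) (metis take_pref min_def)

lemma confE_eq_on_tarc: "\<eta> \<in> tarc q y \<Longrightarrow> length x \<le> length y \<Longrightarrow> confE x \<eta> = lcp x (take (length x) y)"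
  by (auto simp: confE_def mem_tarc_iff take_pref min_def) (metis take_pref min_def)

lemma tarc_disjoint_same_length: "length y = length y' \<Longrightarrow> y \<noteq> y' \<Longrightarrow> tarc q y \<inter> tarc q y' = {}"
  by (auto simp: mem_tarc_iff)

lemma tarc_disjoint: "length y \<le> length y' \<Longrightarrow> take (length y) y' \<noteq> y \<Longrightarrow> tarc q y \<inter> tarc q y' = {}"
  by (auto simp: mem_tarc_iff) (metis take_pref min_def)

lemma tarc_mono: "take (length y) y' = y \<Longrightarrow> length y \<le> length y' \<Longrightarrow> tarc q y' \<subseteq> tarc q y"
  using tarc_take by (metis subsetI)

lemma tarc_pref_antimono: "n \<le> m \<Longrightarrow> tarc q (pref \<xi> m) \<subseteq> tarc q (pref \<xi> n)"
  by (rule tarc_mono) (simp_all add: take_pref min_def)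

lemma hor_snoc: "hor (p @ [b]) \<omega> = (if p @ [b] = pref \<omega> (Suc (length p)) then hor p \<omega> - 1 else hor p \<omega> + 1)"
proof -
  have c1: "confE (p@[b]) \<omega> = lcp (p@[b]) (pref \<omega> (length p) @ [\<omega> (length p)])"
    by (simp add: confE_def pref_Suc)
  have c0: "confE p \<omega> = lcp p (pref \<omega> (length p))" by (simp add: confE_def)
  show ?thesis
  proof (cases "p @ [b] = pref \<omega> (Suc (length p))")
    case True
    then have "p = pref \<omega> (length p)" "b = \<omega> (length p)" by (auto simp: pref_Suc)
    then show ?thesis using c1 c0 True by (simp add: hor_def)
  next
    case False
    then have "\<not> (p = pref \<omega> (length p) \<and> b = \<omega> (length p))" by (auto simp: pref_Suc)
    then have "confE (p@[b]) \<omega> = confE p \<omega>" using c1 c0 lcp_snoc[of p "pref \<omega> (length p)" b] by simp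
    then show ?thesis using False by (simp add: hor_def)
  qed
qed

definition alternating_end :: "nat list \<Rightarrow> nat \<Rightarrow> nat" where
  "alternating_end y n = (let a = (if y \<noteq> [] \<and> last y = 0 then 1 else 0) in
     if n < length y then y ! n else if even (n - length y) then a else 1 - a)"

lemma alternating_end_in_tarc: assumes q: "q \<ge> 1" and y: "y \<in> verts q" shows "alternating_end y \<in> tarc q y"
proof -
  define a where "a = (if y \<noteq> [] \<and> last y = 0 then 1 else (0::nat))"
  have e: "alternating_end y n = (if n < length y then y ! n else if even (n - length y) then a else 1 - a)" for n
    by (simp add: alternating_end_def a_def Let_def)
  have a1: "a \<le> 1" by (simp add: a_def)
  have le: "alternating_end y n \<le> q" for n
    using y q a1 by (auto simp: e verts_def)
  have ne: "alternating_end y (Suc n) \<noteq> alternating_end y n" for n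
  proof (cases "Suc n < length y")
    case True then show ?thesis using y by (auto simp: e verts_def)
  next
    case False
    show ?thesis
    proof (cases "n < length y")
      case True
      then have n: "Suc n = length y" using False by simp
      then have "y ! n = last y" by (metis diff_Suc_1 last_conv_nth list.size(3) nat.distinct(1))
      then show ?thesis using n True by (auto simp: e a_def)
    next
      case False
      define m where "m = n - length y"
      have s: "Suc n - length y = Suc m" using False by (simp add: m_def)
      have "a \<noteq> 1 - a" using a1 by arith
      have e1: "alternating_end y (Suc n) = (if even (Suc m) then a else 1 - a)"
        using False s by (simp add: e)
      have e2: "alternating_end y n = (if even m then a else 1 - a)" using False by (simp add: e m_def)
      have "1 - a \<noteq> a" using \<open>a \<noteq> 1 - a\<close> by metis
      then show ?thesis using \<open>a \<noteq> 1 - a\<close> unfolding e1 e2 by (cases "even m") simp_all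
    qed
  qed
  have "pref (alternating_end y) (length y) = y"
  proof (rule nth_equalityI)
    fix i assume "i < length (pref (alternating_end y) (length y))"
    then have "i < length y" by simp
    then show "pref (alternating_end y) (length y) ! i = y ! i" by (simp add: nth_pref e)
  qed simp
  then show ?thesis using le ne by (simp add: mem_tarc_iff ends_def)
qed

lemma tarc_nonempty: "q \<ge> 1 \<Longrightarrow> y \<in> verts q \<Longrightarrow> tarc q y \<noteq> {}"
  using alternating_end_in_tarc by blast

lemma finite_children: "finite (children q x)"
proof -
  have "children q x \<subseteq> (\<lambda>b. x @ [b]) ` {..q}"
    by (auto simp: children_def snoc_in_verts_iff)
  then show ?thesis by (rule finite_subset) simp
qed

lemma length_children: "c \<in> children q x \<Longrightarrow> length c = Suc (length x)"
  by (auto simp: children_def)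

lemma take_children: "c \<in> children q x \<Longrightarrow> take (length x) c = x"
  by (auto simp: children_def)

lemma tarc_eq_UN_children: "x \<in> verts q \<Longrightarrow> tarc q x = (\<Union>c\<in>children q x. tarc q c)"
proof
  assume x: "x \<in> verts q"
  show "tarc q x \<subseteq> (\<Union>c\<in>children q x. tarc q c)"
  proof
    fix \<eta> assume e: "\<eta> \<in> tarc q x"
    then have "pref \<eta> (length x) = x" "\<eta> \<in> ends q" by (auto simp: mem_tarc_iff)
    then have "pref \<eta> (Suc (length x)) = x @ [\<eta> (length x)]" by (simp add: pref_Suc)
    moreover have "pref \<eta> (Suc (length x)) \<in> verts q" using \<open>\<eta> \<in> ends q\<close> by (rule pref_in_verts)
    ultimately have "x @ [\<eta> (length x)] \<in> children q x" "\<eta> \<in> tarc q (x @ [\<eta> (length x)])"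
      using \<open>\<eta> \<in> ends q\<close> by (auto simp: children_def mem_tarc_iff)
    then show "\<eta> \<in> (\<Union>c\<in>children q x. tarc q c)" by blast
  qed
next
  show "(\<Union>c\<in>children q x. tarc q c) \<subseteq> tarc q x"
    using tarc_mono take_children length_children by (metis UN_least le_SucI order_refl)
qed

lemma tlevel_Suc: "tlevel q (Suc N) = (\<Union>y\<in>tlevel q N. children q y)"
proof
  show "tlevel q (Suc N) \<subseteq> (\<Union>y\<in>tlevel q N. children q y)"
  proof
    fix c assume c: "c \<in> tlevel q (Suc N)"
    then have "c \<noteq> []" by (auto simp: tlevel_def)
    then have "c = butlast c @ [last c]" by simp
    moreover have "butlast c \<in> tlevel q N" using c by (auto simp: tlevel_def butlast_in_verts)
    ultimately show "c \<in> (\<Union>y\<in>tlevel q N. children q y)" using c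
      by (auto simp: children_def tlevel_def)
  qed
qed (auto simp: tlevel_def children_def)

lemma finite_tlevel: "finite (tlevel q N)"
proof -
  have "tlevel q N \<subseteq> {xs. set xs \<subseteq> {..q} \<and> length xs = N}"
    by (auto simp: tlevel_def verts_def in_set_conv_nth)
  then show ?thesis by (rule finite_subset) (rule finite_lists_length_eq, simp)
qed

lemma children_disjoint: "y \<noteq> y' \<Longrightarrow> children q y \<inter> children q y' = {}"
  by (auto simp: children_def)

lemma children_in_verts: "c \<in> children q x \<Longrightarrow> c \<in> verts q" by (simp add: children_def)

lemma tarc_in_basic_sets: "x \<in> verts q \<Longrightarrow> tarc q x \<in> basic_sets q"
  unfolding basic_sets_def by (rule CollectI, rule exI[of _ x], rule exI[of _ "{}"]) auto

lemma UN_tarc_children_in_bdry_alg: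
  assumes "x \<in> verts q" "S \<subseteq> children q x"
  shows "(\<Union>c\<in>S. tarc q c) \<in> bdry_alg q"
proof -
  have fin: "finite (tarc q ` S)" using finite_children assms(2) finite_subset by blast
  have sub: "tarc q ` S \<subseteq> basic_sets q" using assms children_in_verts tarc_in_basic_sets by blast
  have dis: "disjoint (tarc q ` S)"
  proof (rule disjointI)
    fix A B assume "A \<in> tarc q ` S" "B \<in> tarc q ` S" "A \<noteq> B"
    then obtain c c' where "c \<in> S" "c' \<in> S" "A = tarc q c" "B = tarc q c'" "c \<noteq> c'" by blast
    moreover have "length c = length c'" using \<open>c \<in> S\<close> \<open>c' \<in> S\<close> length_children assms(2) by (metis subsetD)
    ultimately show "A \<inter> B = {}" using tarc_disjoint_same_length[of c c' q] by auto
  qed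
  show ?thesis unfolding bdry_alg_def using fin sub dis by blast
qed

lemma tarc_in_bdry_alg: "x \<in> verts q \<Longrightarrow> tarc q x \<in> bdry_alg q"
proof -
  assume x: "x \<in> verts q"
  have "{tarc q x} \<subseteq> basic_sets q" using tarc_in_basic_sets[OF x] by simp
  moreover have "disjoint {tarc q x}" by (simp add: disjoint_def)
  ultimately show ?thesis unfolding bdry_alg_def by (metis (mono_tags, lifting) CollectI Union_insert
      Sup_empty finite.emptyI finite.insertI sup_bot.right_neutral)
qed

lemma empty_in_bdry_alg: "{} \<in> bdry_alg q"
  unfolding bdry_alg_def by (rule CollectI, rule exI[of _ "{}"]) (auto simp: disjoint_def)

lemma distribution_empty: "distribution q \<nu> \<Longrightarrow> \<nu> {} = 0"
  using empty_in_bdry_alg[of q] unfolding distribution_def by (metis Un_empty add_cancel_right_right inf_bot_left)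

lemma distribution_UN_children:
  assumes d: "distribution q \<nu>" and x: "x \<in> verts q" and S: "S \<subseteq> children q x"
  shows "\<nu> (\<Union>c\<in>S. tarc q c) = (\<Sum>c\<in>S. \<nu> (tarc q c))"
proof -
  have "finite S" using S finite_children finite_subset by blast
  then show ?thesis using S
  proof (induction S rule: finite_induct)
    case empty then show ?case using distribution_empty[OF d] by simp
  next
    case (insert a S)
    have e: "(\<Union>c\<in>insert a S. tarc q c) = tarc q a \<union> (\<Union>c\<in>S. tarc q c)" by simp
    have dj: "tarc q a \<inter> (\<Union>c\<in>S. tarc q c) = {}"
      using insert tarc_disjoint_same_length[of a _ q] length_children by (auto, metis IntI empty_iff subsetD)
    have A: "tarc q a \<in> bdry_alg q" using insert children_in_verts tarc_in_bdry_alg by blast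
    have B: "(\<Union>c\<in>S. tarc q c) \<in> bdry_alg q" using insert UN_tarc_children_in_bdry_alg[OF x] by blast
    have "\<nu> (\<Union>c\<in>insert a S. tarc q c) = \<nu> (tarc q a) + \<nu> (\<Union>c\<in>S. tarc q c)"
      using d A B dj unfolding distribution_def e by blast
    then show ?case using insert by simp
  qed
qed

lemma distribution_tarc_eq_sum_children: "distribution q \<nu> \<Longrightarrow> x \<in> verts q \<Longrightarrow> \<nu> (tarc q x) = (\<Sum>c\<in>children q x. \<nu> (tarc q c))"
  using distribution_UN_children[of q \<nu> x "children q x"] tarc_eq_UN_children[of x q] by simp

definition some_end :: "nat \<Rightarrow> nat list \<Rightarrow> (nat \<Rightarrow> nat)" where
  "some_end q y = (SOME \<eta>. \<eta> \<in> tarc q y)"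

lemma some_end_in_tarc: "q \<ge> 1 \<Longrightarrow> y \<in> verts q \<Longrightarrow> some_end q y \<in> tarc q y"
  unfolding some_end_def using tarc_nonempty by (metis ex_in_conv someI_ex)

definition level_sum :: "nat \<Rightarrow> ((nat \<Rightarrow> nat) set \<Rightarrow> complex) \<Rightarrow> ((nat \<Rightarrow> nat) \<Rightarrow> complex) \<Rightarrow> nat \<Rightarrow> complex" where
  "level_sum q \<nu> F N = (\<Sum>y\<in>tlevel q N. F (some_end q y) * \<nu> (tarc q y))"

definition level_constant :: "nat \<Rightarrow> ((nat \<Rightarrow> nat) \<Rightarrow> complex) \<Rightarrow> nat \<Rightarrow> bool" where
  "level_constant q F N \<longleftrightarrow> (\<forall>y\<in>tlevel q N. \<forall>\<eta>\<in>tarc q y. \<forall>\<eta>'\<in>tarc q y. F \<eta> = F \<eta>')"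

lemma level_constant_Suc: "level_constant q F N \<Longrightarrow> level_constant q F (Suc N)"
  unfolding level_constant_def
proof (intro ballI)
  fix c \<eta> \<eta>' assume a: "\<forall>y\<in>tlevel q N. \<forall>\<eta>\<in>tarc q y. \<forall>\<eta>'\<in>tarc q y. F \<eta> = F \<eta>'"
    and c: "c \<in> tlevel q (Suc N)" and e: "\<eta> \<in> tarc q c" "\<eta>' \<in> tarc q c"
  obtain y where y: "y \<in> tlevel q N" "c \<in> children q y" using c tlevel_Suc by blast
  have "tarc q c \<subseteq> tarc q y" using y take_children length_children tarc_mono by (metis le_SucI order_refl)
  then show "F \<eta> = F \<eta>'" using a y e by blast
qed

lemma level_constant_mono: "N \<le> M \<Longrightarrow> level_constant q F N \<Longrightarrow> level_constant q F M"
  by (induction M rule: dec_induct) (auto intro: level_constant_Suc)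

lemma level_sum_Suc:
  assumes q: "q \<ge> 1" and d: "distribution q \<nu>" and c: "level_constant q F N"
  shows "level_sum q \<nu> F (Suc N) = level_sum q \<nu> F N"
proof -
  have "level_sum q \<nu> F (Suc N) = (\<Sum>y\<in>tlevel q N. \<Sum>c\<in>children q y. F (some_end q c) * \<nu> (tarc q c))"
    unfolding level_sum_def tlevel_Suc
    by (rule sum.UNION_disjoint) (simp_all add: finite_tlevel finite_children children_disjoint)
  also have "\<dots> = (\<Sum>y\<in>tlevel q N. F (some_end q y) * (\<Sum>c\<in>children q y. \<nu> (tarc q c)))"
  proof (rule sum.cong[OF refl])
    fix y assume y: "y \<in> tlevel q N"
    have yv: "y \<in> verts q" using y by (simp add: tlevel_def)
    have "F (some_end q c) = F (some_end q y)" if "c \<in> children q y" for c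
    proof -
      have "tarc q c \<subseteq> tarc q y" using that take_children length_children tarc_mono by (metis le_SucI order_refl)
      then show ?thesis using some_end_in_tarc[OF q] children_in_verts that yv c y unfolding level_constant_def by blast
    qed
    then show "(\<Sum>c\<in>children q y. F (some_end q c) * \<nu> (tarc q c)) = F (some_end q y) * (\<Sum>c\<in>children q y. \<nu> (tarc q c))"
      by (simp add: sum_distrib_left)
  qed
  also have "\<dots> = level_sum q \<nu> F N"
    unfolding level_sum_def using distribution_tarc_eq_sum_children[OF d] by (auto simp: tlevel_def intro!: sum.cong)
  finally show ?thesis .
qed

lemma level_sum_stable:
  assumes q: "q \<ge> 1" and d: "distribution q \<nu>" and c: "level_constant q F N" and NM: "N \<le> M"
  shows "level_sum q \<nu> F M = level_sum q \<nu> F N"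
  using NM
proof (induction M rule: dec_induct)
  case (step n)
  then show ?case using level_sum_Suc[OF q d level_constant_mono[OF step(1) c]] by simp
qed simp

lemma dist_integral_eq_level_sum:
  assumes q: "q \<ge> 1" and d: "distribution q \<nu>" and c: "level_constant q F N"
  shows "dist_integral q \<nu> F = level_sum q \<nu> F N"
proof -
  define P where "P = (\<lambda>N. \<forall>y\<in>tlevel q N. \<forall>\<xi>\<in>tarc q y. \<forall>\<eta>\<in>tarc q y. F \<xi> = F \<eta>)"
  define N0 where "N0 = Least P"
  have PN: "P N" using c unfolding level_constant_def P_def by blast
  have c0: "level_constant q F N0" using LeastI[of P N, OF PN] unfolding N0_def level_constant_def P_def by blast
  have le: "N0 \<le> N" unfolding N0_def using Least_le[of P N, OF PN] .
  have "dist_integral q \<nu> F = level_sum q \<nu> F N0"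
    unfolding dist_integral_def level_sum_def some_end_def N0_def P_def by simp
  also have "\<dots> = level_sum q \<nu> F N" using level_sum_stable[OF q d c0 le] by simp
  finally show ?thesis .
qed

lemma level_constant_confE: "length z \<le> N \<Longrightarrow> level_constant q (\<lambda>\<eta>. G (confE z \<eta>)) N"
  unfolding level_constant_def tlevel_def using confE_eq_on_tarc by (metis (mono_tags, lifting) mem_Collect_eq)

lemma confE_some_end: "q \<ge> 1 \<Longrightarrow> y \<in> verts q \<Longrightarrow> length z \<le> length y \<Longrightarrow> confE z (some_end q y) = lcp z (take (length z) y)"
  using confE_eq_on_tarc some_end_in_tarc by blast

section \<open>Geodesic weights and their kernels\<close>

lemma geo_w_prefix: "take (length c) x = c \<Longrightarrow>
   geo_w W x c = (\<Prod>k\<in>{length c..<length x}. W (take (Suc k) x) (take k x))"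
  by (simp add: geo_w_def lcp_eq_prefix_right Let_def)

lemma geo_w_root: "geo_w W [] y = (\<Prod>k\<in>{0..<length y}. W (take k y) (take (Suc k) y))"
  by (simp add: geo_w_def Let_def)

lemma geo_w_self[simp]: "geo_w W x x = 1"
  by (simp add: geo_w_def Let_def)

lemma geo_w_root_snoc: "geo_w W [] (p @ [b]) = geo_w W [] p * W p (p @ [b])"
proof -
  have "geo_w W [] (p @ [b]) = (\<Prod>k\<in>{0..<Suc (length p)}. W (take k (p@[b])) (take (Suc k) (p@[b])))"
    by (simp add: geo_w_root)
  also have "\<dots> = (\<Prod>k\<in>{0..<length p}. W (take k (p@[b])) (take (Suc k) (p@[b]))) * W p (p @ [b])"
    by simp
  also have "(\<Prod>k\<in>{0..<length p}. W (take k (p@[b])) (take (Suc k) (p@[b]))) = geo_w W [] p"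
    unfolding geo_w_root by (rule prod.cong) auto
  finally show ?thesis .
qed

lemma geo_w_snoc_prefix: assumes "take (length c) p = c"
  shows "geo_w W (p @ [b]) c = W (p @ [b]) p * geo_w W p c"
proof -
  have l: "length c \<le> length p" using length_le_if_take_eq[OF assms] .
  have c2: "take (length c) (p @ [b]) = c" using assms l by simp
  have "geo_w W (p @ [b]) c = (\<Prod>k\<in>{length c..<Suc (length p)}. W (take (Suc k) (p@[b])) (take k (p@[b])))"
    using geo_w_prefix[OF c2] by simp
  also have "\<dots> = (\<Prod>k\<in>{length c..<length p}. W (take (Suc k) (p@[b])) (take k (p@[b]))) * W (p @ [b]) p"
    using l by (simp add: prod.atLeastLessThan_Suc)
  also have "(\<Prod>k\<in>{length c..<length p}. W (take (Suc k) (p@[b])) (take k (p@[b]))) = geo_w W p c"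
    unfolding geo_w_prefix[OF assms] by (rule prod.cong) auto
  finally show ?thesis by simp
qed

lemma geo_w_snoc_parent: "geo_w W (p @ [b]) p = W (p @ [b]) p"
  using geo_w_snoc_prefix[of p p W b] by simp

lemma geo_w_nonzero: "\<forall>u v. W u v \<noteq> 0 \<Longrightarrow> geo_w W x y \<noteq> 0"
  by (simp add: geo_w_def Let_def)

definition edge_kernel :: "(nat list \<Rightarrow> nat list \<Rightarrow> complex) \<Rightarrow> nat list \<Rightarrow> (nat \<Rightarrow> nat) \<Rightarrow> complex" where
  "edge_kernel W x \<eta> = geo_w W x (confE x \<eta>) / geo_w W [] (confE x \<eta>)"

lemma Kker_eq_edge_kernel: "Kker q \<alpha> \<omega> lam = edge_kernel (edge_w (Fp q \<alpha> lam) (Fm \<alpha> lam) \<omega>)"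
  by (auto simp: Kker_def edge_kernel_def fw_def fun_eq_iff)

lemma Kkert_eq_edge_kernel: "Kkert q \<alpha> \<omega> lam = edge_kernel (edge_w (Fpt q \<alpha> lam) (Fmt \<alpha> lam) \<omega>)"
  by (auto simp: Kkert_def edge_kernel_def fwt_def fun_eq_iff)

lemma confE_Nil[simp]: "confE [] \<eta> = []" by (simp add: confE_def)

lemma edge_kernel_Nil[simp]: "edge_kernel W [] \<eta> = 1" by (simp add: edge_kernel_def)

lemma confE_pref: "confE (pref \<xi> n) \<xi> = pref \<xi> n" by (simp add: confE_def)

lemma edge_kernel_pref: "edge_kernel W (pref \<xi> n) \<xi> = 1 / geo_w W [] (pref \<xi> n)"
  by (simp add: edge_kernel_def confE_pref)

lemma take_length_confE: "take (length (confE x \<eta>)) x = confE x \<eta>"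
  unfolding confE_def by (rule take_length_lcp)

lemma confE_snoc_off_ray: assumes "p @ [b] \<noteq> pref \<xi> (Suc (length p))"
  shows "confE (p @ [b]) \<xi> = confE p \<xi>"
proof -
  have "confE (p @ [b]) \<xi> = lcp (p@[b]) (pref \<xi> (length p) @ [\<xi> (length p)])"
    by (simp add: confE_def pref_Suc)
  also have "\<dots> = lcp p (pref \<xi> (length p))"
    using assms by (subst lcp_snoc) (auto simp: pref_Suc)
  finally show ?thesis by (simp add: confE_def)
qed

lemma edge_kernel_snoc_off_ray: assumes "p @ [b] \<noteq> pref \<xi> (Suc (length p))"
  shows "edge_kernel W (p @ [b]) \<xi> = W (p @ [b]) p * edge_kernel W p \<xi>"
  unfolding edge_kernel_def confE_snoc_off_ray[OF assms] using geo_w_snoc_prefix[OF take_length_confE[of p \<xi>], of W b] by simp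

lemma lcp_snoc_other: assumes "length y = Suc (length p)" "y \<noteq> p @ [b]"
  shows "lcp (p @ [b]) y = lcp p (take (length p) y)"
proof -
  have "y \<noteq> []" using assms by auto
  then have y: "y = take (length p) y @ [last y]"
    using assms by (metis append_butlast_last_id butlast_conv_take diff_Suc_1)
  have "lcp (p @ [b]) (take (length p) y @ [last y]) = lcp p (take (length p) y)"
    using assms y by (subst lcp_snoc) auto
  then show ?thesis using y by metis
qed

lemma edge_kernel_snoc_minus_parent:
  assumes q: "q \<ge> 1" and y: "y \<in> verts q" "length y = Suc (length p)"
  shows "edge_kernel W (p @ [b]) (some_end q y) - W (p @ [b]) p * edge_kernel W p (some_end q y) =
    (if y = p @ [b] then 1 / geo_w W [] (p @ [b]) - W (p @ [b]) p / geo_w W [] p else 0)"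
proof -
  define x where "x = p @ [b]"
  have cx: "confE x (some_end q y) = lcp x y" using confE_some_end[OF q y(1), of x] y(2) by (simp add: x_def)
  have cp: "confE p (some_end q y) = lcp p (take (length p) y)"
    using confE_some_end[OF q y(1), of p] y(2) by simp
  show ?thesis
  proof (cases "y = x")
    case True
    then have "confE x (some_end q y) = x" "confE p (some_end q y) = p"
      using cx cp by (auto simp: x_def lcp_eq_prefix_left)
    then show ?thesis using True by (simp add: edge_kernel_def x_def)
  next
    case False
    have e: "lcp x y = lcp p (take (length p) y)"
      using lcp_snoc_other[of y p b] False y(2) by (simp add: x_def)
    have k1: "edge_kernel W x (some_end q y) = geo_w W x (lcp x y) / geo_w W [] (lcp x y)"
      by (simp add: edge_kernel_def cx)
    have k2: "edge_kernel W p (some_end q y) = geo_w W p (lcp x y) / geo_w W [] (lcp x y)"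
      by (simp add: edge_kernel_def cp e)
    have "edge_kernel W x (some_end q y) = W x p * edge_kernel W p (some_end q y)"
      unfolding k1 k2 e
      using geo_w_snoc_prefix[OF take_length_lcp[of p "take (length p) y"], of W b] by (simp add: x_def)
    then show ?thesis using False by (simp add: x_def)
  qed
qed

text \<open>The integrands of \<open>G (p @ [b])\<close> and \<open>W (p @ [b]) p * G p\<close> differ only on the arc of \<open>p @ [b]\<close>.\<close>

lemma distribution_arc_recursion:
  assumes q: "q \<ge> 1" and d: "distribution q \<nu>" and x: "p @ [b] \<in> verts q"
    and G: "\<forall>z\<in>verts q. G z = dist_integral q \<nu> (edge_kernel W z)"
    and W_nonzero: "\<forall>u v. W u v \<noteq> 0"
  shows "\<nu> (tarc q (p @ [b])) * (1 - W (p @ [b]) p * W p (p @ [b])) / geo_w W [] (p @ [b])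
       = G (p @ [b]) - W (p @ [b]) p * G p"
proof -
  define n where "n = Suc (length p)"
  define D where "D = 1 / geo_w W [] (p @ [b]) - W (p @ [b]) p / geo_w W [] p"
  have pv: "p \<in> verts q" using x snoc_in_verts_iff by blast
  have "level_constant q (edge_kernel W z) n" if "length z \<le> n" for z
    unfolding edge_kernel_def using level_constant_confE[OF that] .
  then have G_level: "G z = level_sum q \<nu> (edge_kernel W z) n" if "z \<in> verts q" "length z \<le> n" for z
    using G that dist_integral_eq_level_sum[OF q d] by simp
  have "G (p @ [b]) - W (p @ [b]) p * G p =
      (\<Sum>y\<in>tlevel q n. (edge_kernel W (p @ [b]) (some_end q y) - W (p @ [b]) p * edge_kernel W p (some_end q y)) * \<nu> (tarc q y))"
    using G_level[OF x] G_level[OF pv] unfolding level_sum_def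
    by (simp add: n_def sum_distrib_left algebra_simps sum_subtractf)
  also have "\<dots> = (\<Sum>y\<in>tlevel q n. if y = p @ [b] then D * \<nu> (tarc q (p @ [b])) else 0)"
    by (rule sum.cong) (auto simp: edge_kernel_snoc_minus_parent[OF q] tlevel_def n_def D_def)
  also have "\<dots> = D * \<nu> (tarc q (p @ [b]))"
    using x by (subst sum.delta[OF finite_tlevel]) (simp add: tlevel_def n_def)
  also have "\<dots> = \<nu> (tarc q (p @ [b])) * (1 - W (p @ [b]) p * W p (p @ [b])) / geo_w W [] (p @ [b])"
    using geo_w_nonzero[OF W_nonzero, of "[]" p] W_nonzero by (simp add: D_def geo_w_root_snoc field_simps)
  finally show ?thesis by simp
qed

lemma edge_w_to_child: "edge_w Fpl Fmi \<omega> p (p @ [b]) = (if p @ [b] = pref \<omega> (Suc (length p)) then Fmi else Fpl)"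
  by (simp add: edge_w_def hor_snoc)

lemma edge_w_to_parent: "edge_w Fpl Fmi \<omega> (p @ [b]) p = (if p @ [b] = pref \<omega> (Suc (length p)) then Fpl else Fmi)"
  by (simp add: edge_w_def hor_snoc)

text \<open>An abstract version of the pair \<open>f\<close>, \<open>f~\<close> of the paper: \<open>a\<close> is the weight of a step towards
  \<open>\<omega>\<close> and \<open>c * a\<close> that of a step away from it, and \<open>F\<^sub>- F~\<^sub>- = (1 - \<alpha>) / \<alpha>\<close> becomes
  \<open>c a a' = 1 / q\<close>. The locale is used with \<open>(a, a') = (F\<^sub>-, F~\<^sub>-)\<close> for \<open>\<nu>\<close> and with the
  roles exchanged for \<open>\<nu>~\<close>.\<close>

locale kernel_pair =
  fixes q :: nat and \<omega> :: "nat \<Rightarrow> nat" and c a a' :: complex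
  assumes q1: "q \<ge> 1" and a_nonzero: "a \<noteq> 0" and a'_nonzero: "a' \<noteq> 0" and ca: "c * a * a' = 1 / of_nat q"
begin

definition W where "W = edge_w (c * a) a \<omega>"
definition W' where "W' = edge_w (c * a') a' \<omega>"
definition r where "r = a / a'"

lemma c_nonzero: "c \<noteq> 0" using ca q1 by auto

lemma W_nonzero: "\<forall>u v. W u v \<noteq> 0" using a_nonzero c_nonzero by (simp add: W_def edge_w_def)

lemma W_edge_product: "W (p @ [b]) p * W p (p @ [b]) = c * a * a"
  by (simp add: W_def edge_w_to_child edge_w_to_parent)

lemma W'_W_edge_product: "W' (p @ [b]) p * W p (p @ [b]) = 1 / of_nat q"
  using ca by (simp add: W_def W'_def edge_w_to_child edge_w_to_parent algebra_simps)

lemma W'_minus_W_edge_product: "(W' (p @ [b]) p - W (p @ [b]) p) * W p (p @ [b]) = c * a * (a' - a)"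
  by (simp add: W_def W'_def edge_w_to_child edge_w_to_parent algebra_simps)

lemma W_W'_child_ratio: "W p (p @ [b]) / W' p (p @ [b]) = r"
  using c_nonzero by (simp add: W_def W'_def edge_w_to_child r_def)

lemma geo_w_ratio: "geo_w W [] y / geo_w W' [] y = r ^ length y"
proof (induction y rule: rev_induct)
  case Nil then show ?case by simp
next
  case (snoc b p)
  have "geo_w W [] (p @ [b]) / geo_w W' [] (p @ [b]) =
      (geo_w W [] p / geo_w W' [] p) * (W p (p @ [b]) / W' p (p @ [b]))"
    by (simp add: geo_w_root_snoc)
  then show ?case using snoc W_W'_child_ratio by simp
qed

lemma c_a_a_eq: "c * a * a = r / of_nat q"
proof -
  have "c * a * a = (c * a * a') * (a / a')" using a'_nonzero by (simp add: field_simps)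
  then show ?thesis using ca by (simp add: r_def)
qed

definition kernel_ratio where "kernel_ratio \<xi> p = edge_kernel W' p \<xi> * geo_w W [] p"

lemma kernel_ratio_pref: "kernel_ratio \<xi> (pref \<xi> n) = r ^ n"
  using geo_w_ratio[of "pref \<xi> n"] by (simp add: kernel_ratio_def edge_kernel_pref)

lemma kernel_ratio_snoc_off_ray: assumes "p @ [b] \<noteq> pref \<xi> (Suc (length p))"
  shows "kernel_ratio \<xi> (p @ [b]) = kernel_ratio \<xi> p / of_nat q"
proof -
  have "kernel_ratio \<xi> (p @ [b]) = (W' (p @ [b]) p * W p (p @ [b])) * kernel_ratio \<xi> p"
    unfolding kernel_ratio_def edge_kernel_snoc_off_ray[OF assms] geo_w_root_snoc by (simp add: algebra_simps)
  then show ?thesis using W'_W_edge_product by simp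
qed

lemma length_confE_le: "length (confE p \<xi>) \<le> length p"
  unfolding confE_def using length_lcp_le_left by blast

lemma kernel_ratio_eq: "kernel_ratio \<xi> p = r ^ length (confE p \<xi>) / of_nat q ^ (length p - length (confE p \<xi>))"
proof (induction p rule: rev_induct)
  case Nil then show ?case by (simp add: kernel_ratio_def)
next
  case (snoc b p)
  show ?case
  proof (cases "p @ [b] = pref \<xi> (Suc (length p))")
    case True
    then have "confE (p @ [b]) \<xi> = p @ [b]" using confE_pref[of \<xi> "Suc (length p)"] by simp
    then show ?thesis using kernel_ratio_pref[of \<xi> "Suc (length p)"] True by simp
  next
    case False
    have e: "confE (p @ [b]) \<xi> = confE p \<xi>" using confE_snoc_off_ray[OF False] .
    have l: "length (confE p \<xi>) \<le> length p" by (rule length_confE_le)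
    have "Suc (length p) - length (confE p \<xi>) = Suc (length p - length (confE p \<xi>))" using l by simp
    then show ?thesis using kernel_ratio_snoc_off_ray[OF False] snoc e by simp
  qed
qed

end

locale represented_kernel = kernel_pair +
  fixes \<nu> :: "(nat \<Rightarrow> nat) set \<Rightarrow> complex" and \<xi> :: "nat \<Rightarrow> nat"
  assumes \<xi>: "\<xi> \<in> ends q" and d: "distribution q \<nu>"
    and hyp: "\<forall>z\<in>verts q. edge_kernel W' z \<xi> = dist_integral q \<nu> (edge_kernel W z)"
begin

lemma arc_recursion: "p @ [b] \<in> verts q \<Longrightarrow>
  \<nu> (tarc q (p @ [b])) * (1 - c * a * a) / geo_w W [] (p @ [b]) = edge_kernel W' (p @ [b]) \<xi> - W (p @ [b]) p * edge_kernel W' p \<xi>"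
  using distribution_arc_recursion[OF q1 d _ _ W_nonzero, of p b "\<lambda>z. edge_kernel W' z \<xi>"] hyp W_edge_product by simp

lemma nu_root_arc: "\<nu> (tarc q []) = 1"
proof -
  have "1 = dist_integral q \<nu> (edge_kernel W [])" using hyp by (metis edge_kernel_Nil Nil_in_verts)
  also have "\<dots> = level_sum q \<nu> (edge_kernel W []) 0"
    by (rule dist_integral_eq_level_sum[OF q1 d]) (simp add: level_constant_def)
  also have "\<dots> = \<nu> (tarc q [])"
  proof -
    have "tlevel q 0 = {[]}" by (auto simp: tlevel_def)
    then show ?thesis by (simp add: level_sum_def)
  qed
  finally show ?thesis by simp
qed

lemma nu_ray_arc_eq: "\<nu> (tarc q (pref \<xi> (Suc m))) * (1 - c * a * a) = r ^ Suc m - c * a * a * r ^ m"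
proof -
  let ?x = "pref \<xi> (Suc m)" and ?p = "pref \<xi> m"
  have x: "?x = ?p @ [\<xi> m]" by (simp add: pref_Suc)
  have xv: "?p @ [\<xi> m] \<in> verts q" using pref_in_verts[OF \<xi>] x by metis
  have R: "\<nu> (tarc q ?x) * (1 - c * a * a) / geo_w W [] ?x = 1 / geo_w W' [] ?x - W ?x ?p / geo_w W' [] ?p"
    using arc_recursion[OF xv] unfolding x[symmetric] by (simp add: edge_kernel_pref)
  have g: "geo_w W [] ?x = geo_w W [] ?p * W ?p ?x" by (simp add: x geo_w_root_snoc)
  have "\<nu> (tarc q ?x) * (1 - c * a * a) = geo_w W [] ?x / geo_w W' [] ?x - (W ?x ?p * W ?p ?x) * (geo_w W [] ?p / geo_w W' [] ?p)"
    using R geo_w_nonzero[OF W_nonzero, of "[]" ?x] unfolding g by (simp add: field_simps)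
  then show ?thesis using geo_w_ratio[of ?x] geo_w_ratio[of ?p] W_edge_product[of ?p "\<xi> m"] x by simp
qed

lemma nu_off_ray_arc_eq: assumes xv: "p @ [b] \<in> verts q" and off: "p @ [b] \<noteq> pref \<xi> (Suc (length p))"
  shows "\<nu> (tarc q (p @ [b])) * (1 - c * a * a) = c * a * (a' - a) * kernel_ratio \<xi> p"
proof -
  have R: "\<nu> (tarc q (p @ [b])) * (1 - c * a * a) / geo_w W [] (p @ [b]) =
     (W' (p @ [b]) p - W (p @ [b]) p) * edge_kernel W' p \<xi>"
    using arc_recursion[OF xv] edge_kernel_snoc_off_ray[OF off, of W'] by (simp add: algebra_simps)
  have "\<nu> (tarc q (p @ [b])) * (1 - c * a * a) = ((W' (p @ [b]) p - W (p @ [b]) p) * W p (p @ [b])) * kernel_ratio \<xi> p"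
    using R geo_w_nonzero[OF W_nonzero, of "[]" "p @ [b]"] unfolding geo_w_root_snoc kernel_ratio_def by (simp add: field_simps)
  then show ?thesis using W'_minus_W_edge_product by simp
qed

end

lemma topspace_bdry_top: "topspace (bdry_top q) = ends q"
proof -
  have "\<Union> (tarc q ` verts q) \<subseteq> ends q" by (auto simp: tarc_def)
  moreover have "ends q \<subseteq> \<Union> (tarc q ` verts q)" using tarc_Nil[of q] Nil_in_verts[of q] by blast
  ultimately have "\<Union> (tarc q ` verts q) = ends q" by blast
  then show ?thesis by (simp add: bdry_top_def)
qed

lemma openin_bdry_top_subset: "{U. openin (bdry_top q) U} \<subseteq> Pow (ends q)"
  using openin_subset topspace_bdry_top by blast

lemma sets_bdry_borel: "sets (bdry_borel q) = sigma_sets (ends q) {U. openin (bdry_top q) U}"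
  unfolding bdry_borel_def topspace_bdry_top using sets_measure_of[OF openin_bdry_top_subset] by simp

lemma space_bdry_borel: "space (bdry_borel q) = ends q"
  unfolding bdry_borel_def topspace_bdry_top using space_measure_of[OF openin_bdry_top_subset] by simp

lemma openin_tarc: "x \<in> verts q \<Longrightarrow> openin (bdry_top q) (tarc q x)"
  unfolding bdry_top_def by (rule topology_generated_by_Basis) simp

lemma openin_in_sets: "openin (bdry_top q) U \<Longrightarrow> U \<in> sets (bdry_borel q)"
  unfolding sets_bdry_borel by (rule sigma_sets.Basic) simp

lemma tarc_in_sets: "x \<in> verts q \<Longrightarrow> tarc q x \<in> sets (bdry_borel q)"
  using openin_tarc openin_in_sets by blast

lemma openin_bdry_top_arc:
  assumes "openin (bdry_top q) U" "\<eta> \<in> U"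
  shows "\<exists>y\<in>verts q. \<eta> \<in> tarc q y \<and> tarc q y \<subseteq> U"
proof -
  have "generate_topology_on (tarc q ` verts q) U"
    using assms(1) unfolding bdry_top_def by (rule openin_topology_generated_by)
  then show ?thesis using assms(2)
  proof (induction arbitrary: \<eta> rule: generate_topology_on.induct)
    case Empty then show ?case by simp
  next
    case (Int a b)
    obtain y1 where y1: "y1 \<in> verts q" "\<eta> \<in> tarc q y1" "tarc q y1 \<subseteq> a" using Int by blast
    obtain y2 where y2: "y2 \<in> verts q" "\<eta> \<in> tarc q y2" "tarc q y2 \<subseteq> b" using Int by blast
    have p1: "pref \<eta> (length y1) = y1" and p2: "pref \<eta> (length y2) = y2" using y1 y2 by (auto simp: mem_tarc_iff)
    show ?case
    proof (cases "length y1 \<le> length y2")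
      case True
      then have "take (length y1) y2 = y1" using p1 p2 by (metis take_pref min_def)
      then have "tarc q y2 \<subseteq> tarc q y1" using True tarc_mono by blast
      then show ?thesis using y1 y2 by blast
    next
      case False
      then have "take (length y2) y1 = y2" using p1 p2 by (metis take_pref min_def nat_le_linear)
      then have "tarc q y1 \<subseteq> tarc q y2" using False tarc_mono by (metis nat_le_linear)
      then show ?thesis using y1 y2 by blast
    qed
  next
    case (UN K)
    then obtain k where "k \<in> K" "\<eta> \<in> k" by blast
    then show ?case using UN by blast
  next
    case (Basis s)
    then show ?case by blast
  qed
qed

lemma openin_eq_UN_arcs:
  assumes "openin (bdry_top q) U"
  shows "U = (\<Union>y\<in>{y \<in> verts q. tarc q y \<subseteq> U}. tarc q y)"
  using openin_bdry_top_arc[OF assms] by blast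

lemma UN_tarc_in_sets: "finite S \<Longrightarrow> S \<subseteq> verts q \<Longrightarrow> (\<Union>c\<in>S. tarc q c) \<in> sets (bdry_borel q)"
  using tarc_in_sets by (intro sets.finite_UN) auto

lemma basic_sets_in_sets: "B \<in> basic_sets q \<Longrightarrow> B \<in> sets (bdry_borel q)"
  unfolding basic_sets_def using tarc_in_sets UN_tarc_in_sets children_in_verts
  by (auto intro!: sets.Diff) (metis (no_types, lifting) children_in_verts subset_iff UN_tarc_in_sets)

lemma basic_sets_in_bdry_alg: "B \<in> basic_sets q \<Longrightarrow> B \<in> bdry_alg q"
  unfolding bdry_alg_def by (rule CollectI, rule exI[of _ "{B}"]) (auto simp: disjoint_def)

lemma complex_measure_on_Un:
  assumes cm: "complex_measure_on M \<mu>" and A: "A \<in> sets M" and B: "B \<in> sets M" and dj: "A \<inter> B = {}"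
  shows "\<mu> (A \<union> B) = \<mu> A + \<mu> B"
proof -
  define X where "X n = (if n = 0 then A else if n = 1 then B else {})" for n :: nat
  have rX: "range X \<subseteq> sets M" using A B by (auto simp: X_def)
  have dX: "disjoint_family X" using dj unfolding disjoint_family_on_def X_def by auto
  have "(\<lambda>n. \<mu> (X n)) sums \<mu> (\<Union>n. X n)" using cm rX dX unfolding complex_measure_on_def by blast
  moreover have "(\<Union>n. X n) = A \<union> B" by (auto simp: X_def split: if_splits)
  moreover have "(\<lambda>n. \<mu> (X n)) sums (\<Sum>n\<in>{0,1}. \<mu> (X n))"
    by (rule sums_finite) (use cm in \<open>auto simp: X_def complex_measure_on_def\<close>)
  ultimately show ?thesis by (simp add: X_def sums_unique2)
qed

lemma bdry_alg_in_sets: "A \<in> bdry_alg q \<Longrightarrow> A \<in> sets (bdry_borel q)"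
  unfolding bdry_alg_def using basic_sets_in_sets by (auto intro!: sets.finite_Union)

lemma distribution_if_complex_measure_on:
  assumes "complex_measure_on (bdry_borel q) \<mu>"
  shows "distribution q \<mu>"
  unfolding distribution_def using complex_measure_on_Un[OF assms] bdry_alg_in_sets by blast

lemma distribution_tarc_diff_UN_children:
  assumes d: "distribution q \<nu>" and x: "x \<in> verts q" and S: "S \<subseteq> children q x"
  shows "\<nu> (tarc q x - (\<Union>c\<in>S. tarc q c)) = \<nu> (tarc q x) - (\<Sum>c\<in>S. \<nu> (tarc q c))"
proof -
  define B where "B = tarc q x - (\<Union>c\<in>S. tarc q c)"
  define C where "C = (\<Union>c\<in>S. tarc q c)"
  have "C \<subseteq> tarc q x" unfolding C_def using S tarc_eq_UN_children[OF x] by blast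
  then have "tarc q x = B \<union> C" "B \<inter> C = {}" by (auto simp: B_def C_def)
  moreover have "B \<in> basic_sets q"
    unfolding B_def basic_sets_def using x S finite_subset[OF S finite_children] by blast
  then have "B \<in> bdry_alg q" by (rule basic_sets_in_bdry_alg)
  moreover have "C \<in> bdry_alg q" unfolding C_def using UN_tarc_children_in_bdry_alg x S by blast
  ultimately have "\<nu> (tarc q x) = \<nu> B + \<nu> C" using d unfolding distribution_def by metis
  then show ?thesis using distribution_UN_children[OF d x S] by (simp add: B_def C_def)
qed

lemma distributions_eq_on_bdry_alg:
  assumes d\<mu>: "distribution q \<mu>" and d\<nu>: "distribution q \<nu>"
    and arcs: "\<And>y. y \<in> verts q \<Longrightarrow> \<mu> (tarc q y) = \<nu> (tarc q y)"
  shows "\<forall>A\<in>bdry_alg q. \<mu> A = \<nu> A"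
proof
  have basic: "\<mu> B = \<nu> B" if B: "B \<in> basic_sets q" for B
  proof -
    obtain x S where "B = tarc q x - (\<Union>c\<in>S. tarc q c)" "x \<in> verts q" "finite S" "S \<subseteq> children q x"
      using B unfolding basic_sets_def by blast
    then show ?thesis
      using distribution_tarc_diff_UN_children[OF d\<mu>] distribution_tarc_diff_UN_children[OF d\<nu>]
        arcs children_in_verts by (auto intro!: sum.cong)
  qed
  fix A assume "A \<in> bdry_alg q"
  then obtain F where F: "A = \<Union>F" "finite F" "F \<subseteq> basic_sets q" "disjoint F"
    unfolding bdry_alg_def by blast
  have "\<mu> (\<Union>F) = \<nu> (\<Union>F)" using F(2-4)
  proof (induction F rule: finite_induct)
    case empty then show ?case using distribution_empty[OF d\<mu>] distribution_empty[OF d\<nu>] by simp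
  next
    case (insert B F)
    have dF: "disjoint F" using insert(5) unfolding disjoint_def by blast
    have "B \<inter> \<Union>F = {}" using insert(2,5) unfolding disjoint_def by (auto simp: disjnt_def)
    moreover have "B \<in> bdry_alg q" "\<Union>F \<in> bdry_alg q"
      using insert dF basic_sets_in_bdry_alg unfolding bdry_alg_def by auto
    ultimately have "\<mu> (\<Union>(insert B F)) = \<mu> B + \<mu> (\<Union>F)" "\<nu> (\<Union>(insert B F)) = \<nu> B + \<nu> (\<Union>F)"
      using d\<mu> d\<nu> unfolding distribution_def by simp_all
    then show ?case using basic insert dF by simp
  qed
  then show "\<mu> A = \<nu> A" using F by simp
qed

lemma complex_measure_on_disjoint_LIMSEQ_zero:
  assumes "complex_measure_on M \<mu>" "range A \<subseteq> sets M" "disjoint_family A"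
  shows "(\<lambda>k. \<mu> (A k)) \<longlonglongrightarrow> 0"
  using assms unfolding complex_measure_on_def by (meson summable_LIMSEQ_zero sums_summable)

section \<open>Branch vertices and the case \<open>|r| > 1\<close>\<close>

definition branch_letter :: "nat \<Rightarrow> (nat \<Rightarrow> nat) \<Rightarrow> nat \<Rightarrow> nat" where
  "branch_letter q \<xi> k = (SOME b. b \<le> q \<and> b \<noteq> \<xi> k \<and> (k = 0 \<or> b \<noteq> \<xi> (k - 1)))"

lemma branch_letter_props: assumes "q \<ge> 2"
  shows "branch_letter q \<xi> k \<le> q \<and> branch_letter q \<xi> k \<noteq> \<xi> k \<and> (k = 0 \<or> branch_letter q \<xi> k \<noteq> \<xi> (k - 1))"
proof -
  have "\<exists>b. b \<le> q \<and> b \<noteq> \<xi> k \<and> (k = 0 \<or> b \<noteq> \<xi> (k - 1))"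
  proof -
    have "\<exists>b::nat. b \<le> 2 \<and> b \<noteq> u \<and> b \<noteq> v" for u v
    proof (cases "u \<noteq> 0 \<and> v \<noteq> 0")
      case True then show ?thesis by (intro exI[of _ 0]) simp
    next
      case F1: False
      show ?thesis
      proof (cases "u \<noteq> 1 \<and> v \<noteq> 1")
        case True then show ?thesis by (intro exI[of _ 1]) simp
      next
        case False then show ?thesis using F1 by (intro exI[of _ 2]) linarith
      qed
    qed
    then obtain b where "b \<le> 2" "b \<noteq> \<xi> k" "b \<noteq> \<xi> (k - 1)" by blast
    then show ?thesis using assms by (intro exI[of _ b]) auto
  qed
  then show ?thesis unfolding branch_letter_def by (rule someI_ex)
qed

definition branch_vertex :: "nat \<Rightarrow> (nat \<Rightarrow> nat) \<Rightarrow> nat \<Rightarrow> nat list" where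
  "branch_vertex q \<xi> k = pref \<xi> k @ [branch_letter q \<xi> k]"

lemma last_pref: "k > 0 \<Longrightarrow> last (pref \<xi> k) = \<xi> (k - 1)"
  by (cases k) (auto simp: pref_Suc)

lemma branch_vertex_in_verts: "q \<ge> 2 \<Longrightarrow> \<xi> \<in> ends q \<Longrightarrow> branch_vertex q \<xi> k \<in> verts q"
  unfolding branch_vertex_def snoc_in_verts_iff using branch_letter_props[of q \<xi> k] pref_in_verts[of \<xi> q k] last_pref[of k \<xi>]
  by (cases k) auto

lemma branch_vertex_off_ray: "q \<ge> 2 \<Longrightarrow> branch_vertex q \<xi> k \<noteq> pref \<xi> (Suc (length (pref \<xi> k)))"
  unfolding branch_vertex_def using branch_letter_props[of q \<xi> k] by (simp add: pref_Suc)

lemma branch_arcs_disjoint: assumes "j \<noteq> k" "q \<ge> 2" shows "tarc q (branch_vertex q \<xi> j) \<inter> tarc q (branch_vertex q \<xi> k) = {}"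
proof -
  have *: "tarc q (branch_vertex q \<xi> j) \<inter> tarc q (branch_vertex q \<xi> k) = {}" if "j < k" for j k
  proof (rule tarc_disjoint)
    show "length (branch_vertex q \<xi> j) \<le> length (branch_vertex q \<xi> k)" using that by (simp add: branch_vertex_def)
    have "take (length (branch_vertex q \<xi> j)) (branch_vertex q \<xi> k) = pref \<xi> (Suc j)"
      using that by (simp add: branch_vertex_def take_pref min_def)
    moreover have "pref \<xi> (Suc j) \<noteq> branch_vertex q \<xi> j"
      using branch_letter_props[OF assms(2), of \<xi> j] unfolding branch_vertex_def pref_Suc by simp
    ultimately show "take (length (branch_vertex q \<xi> j)) (branch_vertex q \<xi> k) \<noteq> branch_vertex q \<xi> j" by simp
  qed
  show ?thesis using assms *[of j k] *[of k j] by (cases "j < k") auto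
qed

context represented_kernel
begin

lemma nu_branch_arc:
  assumes "q \<ge> 2"
  shows "\<nu> (tarc q (branch_vertex q \<xi> k)) * (1 - c * a * a) = c * a * (a' - a) * r ^ k"
  using nu_off_ray_arc_eq[of "pref \<xi> k" "branch_letter q \<xi> k"] kernel_ratio_pref[of \<xi> k]
    branch_vertex_in_verts[OF assms \<xi>, of k] branch_vertex_off_ray[OF assms, of \<xi> k]
  by (simp add: branch_vertex_def)

text \<open>The arcs at the branch vertices are pairwise disjoint, but their masses do not tend to \<open>0\<close>.\<close>

lemma not_extends_to_borel:
  assumes q: "q \<ge> 2" and r: "1 < norm r"
  shows "\<not> extends_to_borel q \<nu>"
proof
  assume "extends_to_borel q \<nu>"
  then obtain \<mu> where cm: "complex_measure_on (bdry_borel q) \<mu>" and agree: "\<forall>A\<in>bdry_alg q. \<mu> A = \<nu> A"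
    unfolding extends_to_borel_def by blast
  define A where "A k = tarc q (branch_vertex q \<xi> k)" for k
  define D where "D = c * a * (a' - a)"
  have "a \<noteq> a'" using r a'_nonzero by (auto simp: r_def)
  then have D0: "D \<noteq> 0" using c_nonzero a_nonzero by (simp add: D_def)
  have nu_A: "\<nu> (A k) * (1 - c * a * a) = D * r ^ k" for k
    using nu_branch_arc[OF q] by (simp add: A_def D_def)
  have pi1: "1 - c * a * a \<noteq> 0" using nu_A[of 0] D0 by auto
  have lower: "norm D / norm (1 - c * a * a) \<le> norm (\<nu> (A k))" for k
  proof -
    have "\<nu> (A k) = D * r ^ k / (1 - c * a * a)" using nu_A[of k] pi1 by (simp add: field_simps)
    then have "norm (\<nu> (A k)) = norm D * norm r ^ k / norm (1 - c * a * a)"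
      by (simp add: norm_mult norm_divide norm_power)
    moreover have "1 \<le> norm r ^ k" using r by (simp add: one_le_power)
    ultimately show ?thesis using pi1 by (simp add: divide_right_mono mult_le_cancel_left1)
  qed
  have "range A \<subseteq> sets (bdry_borel q)"
    using tarc_in_sets branch_vertex_in_verts[OF q \<xi>] by (auto simp: A_def)
  moreover have "disjoint_family A"
    unfolding disjoint_family_on_def A_def using branch_arcs_disjoint[OF _ q] by blast
  ultimately have "(\<lambda>k. \<mu> (A k)) \<longlonglongrightarrow> 0" by (rule complex_measure_on_disjoint_LIMSEQ_zero[OF cm])
  moreover have "\<mu> (A k) = \<nu> (A k)" for k
    using agree tarc_in_bdry_alg branch_vertex_in_verts[OF q \<xi>] by (simp add: A_def)
  ultimately have "(\<lambda>k. norm (\<nu> (A k))) \<longlonglongrightarrow> 0" by (simp add: tendsto_norm_zero)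
  then have "eventually (\<lambda>k. norm (\<nu> (A k)) < norm D / norm (1 - c * a * a)) sequentially"
    using D0 pi1 by (intro order_tendstoD) auto
  then obtain k where "norm (\<nu> (A k)) < norm D / norm (1 - c * a * a)" using eventually_sequentially by auto
  then show False using lower[of k] by simp
qed

end

section \<open>The uniform measure on the ends\<close>

definition branching :: "nat \<Rightarrow> nat \<Rightarrow> nat" where "branching q n = (if n = 0 then Suc q else q)"

definition choice_space :: "nat \<Rightarrow> (nat \<Rightarrow> nat) measure" where
  "choice_space q = PiM UNIV (\<lambda>n. uniform_count_measure {..<branching q n})"

text \<open>A uniformly random end: \<open>c n\<close> chooses the \<open>n\<close>-th letter among the \<open>q + 1\<close> letters
  (\<open>n = 0\<close>) resp. the \<open>q\<close> letters different from the previous one, skipping the latter.\<close>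

primrec choice_end :: "(nat \<Rightarrow> nat) \<Rightarrow> nat \<Rightarrow> nat" where
  "choice_end c 0 = c 0"
| "choice_end c (Suc n) = (if c (Suc n) < choice_end c n then c (Suc n) else Suc (c (Suc n)))"

definition choice_index :: "nat list \<Rightarrow> nat \<Rightarrow> nat" where
  "choice_index y i = (if i = 0 then y ! 0 else if y ! i < y ! (i - 1) then y ! i else y ! i - 1)"

lemma space_choice_space: "space (choice_space q) = PiE UNIV (\<lambda>n. {..<branching q n})"
  by (simp add: choice_space_def space_PiM space_uniform_count_measure)

lemma prob_space_choice_space: "q \<ge> 1 \<Longrightarrow> prob_space (choice_space q)"
  unfolding choice_space_def by (rule prob_space_PiM, rule prob_space_uniform_count_measure) (auto simp: branching_def lessThan_empty_iff)

lemma choice_end_in_ends: assumes q: "q \<ge> 1" and c: "c \<in> space (choice_space q)" shows "choice_end c \<in> ends q"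
proof -
  have cb: "c n < branching q n" for n using c by (auto simp: space_choice_space)
  have le: "choice_end c n \<le> q" for n
  proof (cases n)
    case 0 then show ?thesis using cb[of 0] by (simp add: branching_def)
  next
    case (Suc m) then show ?thesis using cb[of n] by (auto simp: branching_def)
  qed
  have "choice_end c (Suc n) \<noteq> choice_end c n" for n by auto
  then show ?thesis using le by (simp add: ends_def)
qed

lemma skip_letter_eq_iff: "(v::nat) \<noteq> l \<Longrightarrow> ((if c < l then c else Suc c) = v) \<longleftrightarrow> c = (if v < l then v else v - 1)"
  by auto

lemma choice_end_prefix_iff:
  assumes y: "y \<in> verts q" and n: "n \<le> length y"
  shows "(\<forall>i<n. choice_end c i = y ! i) \<longleftrightarrow> (\<forall>i<n. c i = choice_index y i)"
  using n
proof (induction n)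
  case 0 then show ?case by simp
next
  case (Suc n)
  have IH: "(\<forall>i<n. choice_end c i = y ! i) \<longleftrightarrow> (\<forall>i<n. c i = choice_index y i)" using Suc by simp
  show ?case
  proof (cases n)
    case 0 then show ?thesis by (simp add: choice_index_def)
  next
    case (Suc k)
    have neq: "y ! n \<noteq> y ! k" using y \<open>Suc n \<le> length y\<close> Suc unfolding verts_def by auto
    show ?thesis
    proof
      assume a: "\<forall>i<Suc n. choice_end c i = y ! i"
      then have b: "\<forall>i<n. c i = choice_index y i" using IH by auto
      have "choice_end c n = y ! n" using a lessI by blast
      moreover have "choice_end c k = y ! k" using a Suc by (metis less_SucI lessI)
      moreover have "choice_end c n = (if c n < choice_end c k then c n else Suc (c n))" using Suc by simp
      ultimately have "(if c n < y ! k then c n else Suc (c n)) = y ! n" by simp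
      then have "c n = (if y ! n < y ! k then y ! n else y ! n - 1)" using skip_letter_eq_iff[OF neq] by blast
      then have "c n = choice_index y n" using Suc by (simp add: choice_index_def)
      then show "\<forall>i<Suc n. c i = choice_index y i" using b less_Suc_eq by auto
    next
      assume a: "\<forall>i<Suc n. c i = choice_index y i"
      then have b: "\<forall>i<n. choice_end c i = y ! i" using IH by auto
      have "choice_end c k = y ! k" "c n = choice_index y n" using a b Suc by auto
      then have "c n = (if y ! n < y ! k then y ! n else y ! n - 1)" using Suc by (simp add: choice_index_def)
      then have "(if c n < y ! k then c n else Suc (c n)) = y ! n" using skip_letter_eq_iff[OF neq] by blast
      moreover have "choice_end c n = (if c n < choice_end c k then c n else Suc (c n))" using Suc by simp
      ultimately have "choice_end c n = y ! n" using \<open>choice_end c k = y ! k\<close> by simp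
      then show "\<forall>i<Suc n. choice_end c i = y ! i" using b less_Suc_eq by auto
    qed
  qed
qed

lemma choice_index_less: assumes y: "y \<in> verts q" and i: "i < length y" shows "choice_index y i < branching q i"
proof (cases i)
  case 0 then show ?thesis using y i by (auto simp: choice_index_def branching_def verts_def)
next
  case (Suc k)
  have "y ! i \<le> q" "y ! k \<le> q" "y ! i \<noteq> y ! k" using y i Suc by (auto simp: verts_def)
  then show ?thesis using Suc by (auto simp: choice_index_def branching_def)
qed

lemma choice_end_vimage_tarc:
  assumes q: "q \<ge> 1" and y: "y \<in> verts q"
  shows "choice_end -` tarc q y \<inter> space (choice_space q) =
     prod_emb UNIV (\<lambda>n. uniform_count_measure {..<branching q n}) {..<length y} (PiE {..<length y} (\<lambda>i. {choice_index y i}))"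
proof -
  have "c \<in> choice_end -` tarc q y \<longleftrightarrow> (\<forall>i<length y. c i = choice_index y i)" if c: "c \<in> space (choice_space q)" for c
  proof -
    have "c \<in> choice_end -` tarc q y \<longleftrightarrow> pref (choice_end c) (length y) = y"
      using choice_end_in_ends[OF q c] by (simp add: mem_tarc_iff)
    also have "\<dots> \<longleftrightarrow> (\<forall>i<length y. choice_end c i = y ! i)"
      by (auto simp: list_eq_iff_nth_eq nth_pref)
    also have "\<dots> \<longleftrightarrow> (\<forall>i<length y. c i = choice_index y i)" using choice_end_prefix_iff[OF y order_refl] .
    finally show ?thesis .
  qed
  then show ?thesis
  proof (intro set_eqI iffI)
    fix c assume h: "\<And>c. c \<in> space (choice_space q) \<Longrightarrow> (c \<in> choice_end -` tarc q y) = (\<forall>i<length y. c i = choice_index y i)"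
      and c: "c \<in> choice_end -` tarc q y \<inter> space (choice_space q)"
    then show "c \<in> prod_emb UNIV (\<lambda>n. uniform_count_measure {..<branching q n}) {..<length y} (PiE {..<length y} (\<lambda>i. {choice_index y i}))"
      unfolding prod_emb_iff restrict_PiE_iff using c by (auto simp: space_choice_space space_uniform_count_measure)
  next
    fix c assume h: "\<And>c. c \<in> space (choice_space q) \<Longrightarrow> (c \<in> choice_end -` tarc q y) = (\<forall>i<length y. c i = choice_index y i)"
      and c: "c \<in> prod_emb UNIV (\<lambda>n. uniform_count_measure {..<branching q n}) {..<length y} (PiE {..<length y} (\<lambda>i. {choice_index y i}))"
    have cs: "c \<in> space (choice_space q)" using c unfolding prod_emb_iff by (auto simp: space_choice_space space_uniform_count_measure)
    moreover have "\<forall>i<length y. c i = choice_index y i" using c unfolding prod_emb_iff restrict_PiE_iff by auto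
    ultimately show "c \<in> choice_end -` tarc q y \<inter> space (choice_space q)" using h by blast
  qed
qed

lemma choice_end_measurable: assumes q: "q \<ge> 1" shows "choice_end \<in> measurable (choice_space q) (bdry_borel q)"
  unfolding bdry_borel_def topspace_bdry_top
proof (rule measurable_measure_of)
  show "{U. openin (bdry_top q) U} \<subseteq> Pow (ends q)" by (rule openin_bdry_top_subset)
  show "choice_end \<in> space (choice_space q) \<rightarrow> ends q" using choice_end_in_ends[OF q] by blast
  fix U assume "U \<in> {U. openin (bdry_top q) U}"
  then have U: "U = (\<Union>y\<in>{y \<in> verts q. tarc q y \<subseteq> U}. tarc q y)"
    using openin_eq_UN_arcs by blast
  have "choice_end -` U \<inter> space (choice_space q) = (\<Union>y\<in>{y \<in> verts q. tarc q y \<subseteq> U}. choice_end -` tarc q y \<inter> space (choice_space q))"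
    by (subst U) auto
  also have "\<dots> \<in> sets (choice_space q)"
  proof (rule sets.countable_UN'')
    show "countable {y \<in> verts q. tarc q y \<subseteq> U}" by (rule countableI_type)
    fix y assume "y \<in> {y \<in> verts q. tarc q y \<subseteq> U}"
    then have yv: "y \<in> verts q" by simp
    show "choice_end -` tarc q y \<inter> space (choice_space q) \<in> sets (choice_space q)"
      unfolding choice_end_vimage_tarc[OF q yv] unfolding choice_space_def by (intro sets_PiM_I) (auto simp: sets_uniform_count_measure choice_index_less[OF yv])
  qed
  finally show "choice_end -` U \<inter> space (choice_space q) \<in> sets (choice_space q)" .
qed

definition uniform_ends :: "nat \<Rightarrow> (nat \<Rightarrow> nat) measure" where
  "uniform_ends q = distr (choice_space q) (bdry_borel q) choice_end"

lemma prob_space_uniform_ends: "q \<ge> 1 \<Longrightarrow> prob_space (uniform_ends q)"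
  unfolding uniform_ends_def by (rule prob_space.prob_space_distr[OF prob_space_choice_space choice_end_measurable])

lemma sets_uniform_ends[simp]: "sets (uniform_ends q) = sets (bdry_borel q)" by (simp add: uniform_ends_def)
lemma space_uniform_ends: "space (uniform_ends q) = ends q" by (simp add: uniform_ends_def space_bdry_borel)

definition arc_weight :: "nat \<Rightarrow> nat \<Rightarrow> real" where
  "arc_weight q n = (\<Prod>i<n. 1 / real (branching q i))"

lemma uniform_ends_tarc: assumes q: "q \<ge> 1" and y: "y \<in> verts q"
  shows "measure (uniform_ends q) (tarc q y) = arc_weight q (length y)"
proof -
  have "emeasure (uniform_ends q) (tarc q y) = emeasure (choice_space q) (choice_end -` tarc q y \<inter> space (choice_space q))"
    unfolding uniform_ends_def by (rule emeasure_distr[OF choice_end_measurable[OF q] tarc_in_sets[OF y]])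
  also have "\<dots> = (\<Prod>i\<in>{..<length y}. emeasure (uniform_count_measure {..<branching q i}) {choice_index y i})"
    unfolding choice_end_vimage_tarc[OF q y] unfolding choice_space_def
  proof (rule emeasure_PiM_emb)
    show "prob_space (uniform_count_measure {..<branching q i})" for i
      using q by (intro prob_space_uniform_count_measure) (auto simp: branching_def lessThan_empty_iff)
    show "{choice_index y i} \<in> sets (uniform_count_measure {..<branching q i})" if "i \<in> {..<length y}" for i
      using choice_index_less[OF y, of i] that by (auto simp: sets_uniform_count_measure)
  qed auto
  also have "\<dots> = (\<Prod>i\<in>{..<length y}. ennreal (1 / real (branching q i)))"
    by (intro prod.cong refl, subst emeasure_uniform_count_measure) (auto simp: choice_index_less[OF y] ennreal_of_nat_eq_real_of_nat divide_ennreal)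
  also have "\<dots> = ennreal (arc_weight q (length y))" unfolding arc_weight_def by (simp add: prod_ennreal)
  moreover have "arc_weight q (length y) \<ge> 0" unfolding arc_weight_def by (simp add: prod_nonneg)
  ultimately show ?thesis unfolding measure_def by simp
qed

lemma arc_weight_Suc: "arc_weight q (Suc n) = arc_weight q n / real (branching q n)" by (simp add: arc_weight_def)

lemma arc_weight_0[simp]: "arc_weight q 0 = 1" by (simp add: arc_weight_def)

lemma arc_weight_closed: "q \<ge> 1 \<Longrightarrow> arc_weight q (Suc k) * (real q + 1) * real q ^ k = 1"
proof (induction k)
  case 0 then show ?case by (simp add: arc_weight_def branching_def)
next
  case (Suc k)
  have w: "arc_weight q (Suc (Suc k)) = arc_weight q (Suc k) / real q" by (simp add: arc_weight_Suc branching_def)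
  have "arc_weight q (Suc (Suc k)) * (real q + 1) * real q ^ Suc k = (arc_weight q (Suc k) / real q) * (real q + 1) * (real q * real q ^ k)"
    unfolding w by simp
  also have "\<dots> = arc_weight q (Suc k) * (real q + 1) * real q ^ k" using Suc.prems by (simp add: field_simps)
  finally show ?case using Suc by simp
qed

lemma arc_weight_nonneg: "arc_weight q k \<ge> 0" unfolding arc_weight_def by (simp add: prod_nonneg)

lemma arc_weight_bound: "q \<ge> 1 \<Longrightarrow> real q ^ k * (real q + 1) * arc_weight q k \<le> real q + 1"
proof (cases k)
  case 0 then show ?thesis by simp
next
  case (Suc m)
  assume q: "q \<ge> 1"
  have "real q ^ k * (real q + 1) * arc_weight q k = real q * (arc_weight q (Suc m) * (real q + 1) * real q ^ m)"
    using Suc by (simp add: algebra_simps)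
  also have "\<dots> = real q" using arc_weight_closed[OF q] by simp
  finally show ?thesis by simp
qed

context
  fixes U :: "'a measure" and R :: "nat \<Rightarrow> 'a set" and \<beta> :: "nat \<Rightarrow> complex" and Mb :: "nat \<Rightarrow> real"
  assumes fm: "finite_measure U" and R: "\<And>k. R k \<in> sets U"
    and bound: "\<And>k. norm (\<beta> k) * measure U (R k) \<le> Mb k" and sM: "summable Mb"
begin

lemma norm_density_term_le:
  assumes "A \<in> sets U"
  shows "norm (\<beta> k * of_real (measure U (A \<inter> R k))) \<le> Mb k"
proof -
  interpret finite_measure U by (rule fm)
  have "measure U (A \<inter> R k) \<le> measure U (R k)" using assms R by (intro finite_measure_mono) auto
  then have "norm (\<beta> k) * measure U (A \<inter> R k) \<le> norm (\<beta> k) * measure U (R k)"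
    by (simp add: mult_left_mono)
  then show ?thesis using bound[of k] by (simp add: norm_mult)
qed

lemma summable_density_terms: "A \<in> sets U \<Longrightarrow> summable (\<lambda>k. \<beta> k * of_real (measure U (A \<inter> R k)))"
  by (rule summable_comparison_test'[OF sM norm_density_term_le])

lemma density_series_finite_additive:
  fixes A :: "nat \<Rightarrow> 'a set"
  assumes A: "range A \<subseteq> sets U" and dA: "disjoint_family A"
  shows "(\<Sum>n<N. \<Sum>k. \<beta> k * of_real (measure U (A n \<inter> R k))) =
    (\<Sum>k. \<beta> k * of_real (measure U ((\<Union>n<N. A n) \<inter> R k)))"
proof -
  interpret finite_measure U by (rule fm)
  have "(\<Sum>n<N. \<Sum>k. \<beta> k * of_real (measure U (A n \<inter> R k))) =
      (\<Sum>k. \<Sum>n<N. \<beta> k * of_real (measure U (A n \<inter> R k)))"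
    using suminf_sum[of "{..<N}" "\<lambda>n k. \<beta> k * of_real (measure U (A n \<inter> R k))"]
      summable_density_terms A by auto
  also have "(\<lambda>k. \<Sum>n<N. \<beta> k * of_real (measure U (A n \<inter> R k))) =
      (\<lambda>k. \<beta> k * of_real (measure U ((\<Union>n<N. A n) \<inter> R k)))"
  proof
    fix k
    have "measure U ((\<Union>n<N. A n) \<inter> R k) = measure U (\<Union>n\<in>{..<N}. A n \<inter> R k)"
      by (simp add: Int_UN_distrib2)
    also have "\<dots> = (\<Sum>n<N. measure U (A n \<inter> R k))"
    proof (rule measure_finite_Union)
      show "disjoint_family_on (\<lambda>n. A n \<inter> R k) {..<N}"
        using dA unfolding disjoint_family_on_def by auto
    qed (use A R in \<open>auto simp: emeasure_eq_measure\<close>)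
    finally show "(\<Sum>n<N. \<beta> k * of_real (measure U (A n \<inter> R k))) = \<beta> k * of_real (measure U ((\<Union>n<N. A n) \<inter> R k))"
      by (simp add: sum_distrib_left)
  qed
  finally show ?thesis .
qed

lemma density_series_continuous:
  fixes A :: "nat \<Rightarrow> 'a set"
  assumes A: "range A \<subseteq> sets U"
  shows "(\<lambda>N. \<Sum>k. \<beta> k * of_real (measure U ((\<Union>n<N. A n) \<inter> R k))) \<longlonglongrightarrow>
    (\<Sum>k. \<beta> k * of_real (measure U ((\<Union>n. A n) \<inter> R k)))"
proof -
  interpret finite_measure U by (rule fm)
  have "(\<lambda>N. measure U ((\<Union>n<N. A n) \<inter> R k)) \<longlonglongrightarrow> measure U (\<Union>N. (\<Union>n<N. A n) \<inter> R k)" for k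
  proof (rule finite_Lim_measure_incseq)
    show "range (\<lambda>N. (\<Union>n<N. A n) \<inter> R k) \<subseteq> sets U" using A R by auto
    show "incseq (\<lambda>N. (\<Union>n<N. A n) \<inter> R k)"
      unfolding incseq_def by (auto, meson lessThan_iff less_le_trans)
  qed
  moreover have "(\<Union>N. (\<Union>n<N. A n) \<inter> R k) = (\<Union>n. A n) \<inter> R k" for k by auto
  ultimately have lim: "(\<lambda>N. \<beta> k * of_real (measure U ((\<Union>n<N. A n) \<inter> R k))) \<longlonglongrightarrow>
      \<beta> k * of_real (measure U ((\<Union>n. A n) \<inter> R k))" for k
    by (intro tendsto_mult tendsto_const tendsto_of_real) simp
  have "eventually (\<lambda>(k, N). norm (\<beta> k * of_real (measure U ((\<Union>n<N. A n) \<inter> R k))) \<le> Mb k)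
      (at_top \<times>\<^sub>F sequentially)"
    using A norm_density_term_le by (intro always_eventually) auto
  from tannerys_theorem[OF lim this sM] show ?thesis by simp
qed

lemma complex_measure_on_series: "complex_measure_on U (\<lambda>A. \<Sum>k. \<beta> k * of_real (measure U (A \<inter> R k)))"
  unfolding complex_measure_on_def
proof (intro conjI allI impI)
  fix A :: "nat \<Rightarrow> 'a set" assume A: "range A \<subseteq> sets U" and dA: "disjoint_family A"
  show "(\<lambda>n. \<Sum>k. \<beta> k * of_real (measure U (A n \<inter> R k))) sums (\<Sum>k. \<beta> k * of_real (measure U ((\<Union>n. A n) \<inter> R k)))"
    unfolding sums_def density_series_finite_additive[OF A dA] by (rule density_series_continuous[OF A])
qed simp

end

lemma emeasure_density_series:
  fixes \<beta> :: "nat \<Rightarrow> real"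
  assumes U: "finite_measure U" and R: "\<And>k. R k \<in> sets U" and pos: "\<And>k. \<beta> k \<ge> 0"
    and A: "A \<in> sets U" and sumA: "summable (\<lambda>k. \<beta> k * measure U (A \<inter> R k))"
  shows "emeasure (density U (\<lambda>x. \<Sum>k. ennreal (\<beta> k) * indicator (R k) x)) A =
    ennreal (\<Sum>k. \<beta> k * measure U (A \<inter> R k))"
proof -
  interpret finite_measure U by (rule U)
  have "(\<lambda>x. \<Sum>k. ennreal (\<beta> k) * indicator (R k) x) \<in> borel_measurable U" using R by measurable
  then have "emeasure (density U (\<lambda>x. \<Sum>k. ennreal (\<beta> k) * indicator (R k) x)) A =
      (\<integral>\<^sup>+ x. (\<Sum>k. ennreal (\<beta> k) * indicator (R k) x) * indicator A x \<partial>U)"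
    using A by (rule emeasure_density)
  also have "\<dots> = (\<integral>\<^sup>+ x. (\<Sum>k. ennreal (\<beta> k) * indicator (A \<inter> R k) x) \<partial>U)"
    unfolding ennreal_suminf_multc[symmetric]
    by (intro nn_integral_cong) (simp add: indicator_inter_arith mult.assoc mult.commute[of "indicator A _"])
  also have "\<dots> = (\<Sum>k. \<integral>\<^sup>+ x. ennreal (\<beta> k) * indicator (A \<inter> R k) x \<partial>U)"
    by (rule nn_integral_suminf) (use A R in measurable)
  also have "\<dots> = (\<Sum>k. ennreal (\<beta> k * measure U (A \<inter> R k)))"
    using A R by (subst nn_integral_cmult_indicator) (auto simp: emeasure_eq_measure ennreal_mult pos)
  also have "\<dots> = ennreal (\<Sum>k. \<beta> k * measure U (A \<inter> R k))"
    by (rule suminf_ennreal2) (use pos sumA in auto)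
  finally show ?thesis .
qed

lemma prob_space_series_density:
  fixes U :: "'a measure" and R :: "nat \<Rightarrow> 'a set" and \<beta> :: "nat \<Rightarrow> real" and Mb :: "nat \<Rightarrow> real"
  assumes pU: "prob_space U" and R: "\<And>k. R k \<in> sets U" and pos: "\<And>k. \<beta> k \<ge> 0"
    and bound: "\<And>k. \<beta> k * measure U (R k) \<le> Mb k" and sM: "summable Mb"
    and tot: "(\<Sum>k. \<beta> k * measure U (space U \<inter> R k)) = 1"
  shows "\<exists>M. prob_space M \<and> space M = space U \<and> sets M = sets U \<and>
     (\<forall>A\<in>sets U. measure M A = (\<Sum>k. \<beta> k * measure U (A \<inter> R k)))"
proof -
  interpret prob_space U by (rule pU)
  define M where "M = density U (\<lambda>x. \<Sum>k. ennreal (\<beta> k) * indicator (R k) x)"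
  have sumA: "summable (\<lambda>k. \<beta> k * measure U (A \<inter> R k))" if "A \<in> sets U" for A
  proof (rule summable_comparison_test'[OF sM])
    fix k
    have "measure U (A \<inter> R k) \<le> measure U (R k)" using that R by (intro finite_measure_mono) auto
    then show "norm (\<beta> k * measure U (A \<inter> R k)) \<le> Mb k"
      using bound[of k] pos[of k] mult_left_mono by fastforce
  qed
  have em: "emeasure M A = ennreal (\<Sum>k. \<beta> k * measure U (A \<inter> R k))" if "A \<in> sets U" for A
    unfolding M_def using emeasure_density_series[OF finite_measure_axioms R pos that sumA[OF that]] .
  have M: "sets M = sets U" "space M = space U" unfolding M_def by auto
  have "prob_space M" by standard (use em[of "space U"] tot M in simp)
  moreover have "measure M A = (\<Sum>k. \<beta> k * measure U (A \<inter> R k))" if "A \<in> sets U" for A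
    using em[OF that] suminf_nonneg[OF sumA[OF that]] pos unfolding measure_def
    by (simp add: zero_le_mult_iff)
  ultimately show ?thesis using M by blast
qed

lemma geometric_tail_sums:
  fixes r C :: complex assumes r: "norm r < 1"
  shows "(\<lambda>k. if n \<le> k then C * r ^ k else 0) sums (C * r ^ n / (1 - r))"
proof -
  have "(\<lambda>i. (C * r ^ n) * r ^ i) sums ((C * r ^ n) * (1 / (1 - r)))"
    by (rule sums_mult[OF geometric_sums[OF r]])
  then have "(\<lambda>i. (\<lambda>k. if n \<le> k then C * r ^ k else 0) (i + n)) sums (C * r ^ n / (1 - r))"
    by (simp add: power_add algebra_simps)
  then show ?thesis by (subst (asm) sums_iff_shift) simp
qed

section \<open>The case \<open>|r| < 1\<close>\<close>

locale contracting_representation = represented_kernel +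
  assumes rlt: "norm r < 1"
begin

text \<open>\<open>\<mu>\<close> has density \<open>\<beta> k\<close> with respect to the uniform measure on the shell of ends whose
  confluent with \<open>\<xi>\<close> has length \<open>k\<close>; \<open>\<beta>\<close> is read off from the masses of the arcs computed above.\<close>

definition shell where "shell k = tarc q (pref \<xi> k) - tarc q (pref \<xi> (Suc k))"
definition Bc where "Bc = (1 - r) / (of_nat q - r)"
definition \<beta> where "\<beta> k = Bc * r ^ k * of_nat q ^ k * (of_nat q + 1)"
definition \<mu> where "\<mu> A = (\<Sum>k. \<beta> k * of_real (measure (uniform_ends q) (A \<inter> shell k)))"

lemma q_minus_r_nonzero: "of_nat q - r \<noteq> 0"
proof
  assume "of_nat q - r = 0"
  then have "norm r = real q" by (metis eq_iff_diff_eq_0 norm_of_nat)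
  then show False using rlt q1 by simp
qed

lemma one_minus_r_nonzero: "1 - r \<noteq> 0" using rlt by auto

lemma nu_ray_arc: "n \<ge> 1 \<Longrightarrow> \<nu> (tarc q (pref \<xi> n)) = (of_nat q - 1) * r ^ n / (of_nat q - r)"
proof -
  assume "n \<ge> 1"
  then obtain m where n: "n = Suc m" by (cases n) auto
  have e: "\<nu> (tarc q (pref \<xi> (Suc m))) * (1 - r / of_nat q) = r ^ Suc m - r / of_nat q * r ^ m"
    using nu_ray_arc_eq[of m] c_a_a_eq by simp
  have "\<nu> (tarc q (pref \<xi> (Suc m))) * (of_nat q - r) = (of_nat q - 1) * r ^ Suc m"
  proof -
    have "\<nu> (tarc q (pref \<xi> (Suc m))) * (of_nat q - r) = of_nat q * (\<nu> (tarc q (pref \<xi> (Suc m))) * (1 - r / of_nat q))"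
      using q1 by (simp add: field_simps)
    also have "\<dots> = of_nat q * (r ^ Suc m - r / of_nat q * r ^ m)" using e by simp
    also have "\<dots> = (of_nat q - 1) * r ^ Suc m" using q1 by (simp add: field_simps)
    finally show ?thesis .
  qed
  then show ?thesis using q_minus_r_nonzero n by (simp add: field_simps)
qed

lemma nu_off_ray_arc:
  assumes xv: "p @ [b] \<in> verts q" and off: "p @ [b] \<noteq> pref \<xi> (Suc (length p))"
  shows "\<nu> (tarc q (p @ [b])) = Bc * r ^ length (confE p \<xi>) / of_nat q ^ (length p - length (confE p \<xi>))"
proof -
  have e: "\<nu> (tarc q (p @ [b])) * (1 - r / of_nat q) = (1 / of_nat q - r / of_nat q) * kernel_ratio \<xi> p"
  proof -
    have "c * a * (a' - a) = c * a * a' - c * a * a" by (simp add: algebra_simps)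
    then have "c * a * (a' - a) = 1 / of_nat q - r / of_nat q" using ca c_a_a_eq by simp
    then show ?thesis using nu_off_ray_arc_eq[OF xv off] c_a_a_eq by simp
  qed
  have "\<nu> (tarc q (p @ [b])) * (of_nat q - r) = (1 - r) * kernel_ratio \<xi> p"
  proof -
    have "\<nu> (tarc q (p @ [b])) * (of_nat q - r) = of_nat q * (\<nu> (tarc q (p @ [b])) * (1 - r / of_nat q))"
      using q1 by (simp add: field_simps)
    also have "\<dots> = of_nat q * ((1 / of_nat q - r / of_nat q) * kernel_ratio \<xi> p)" using e by simp
    also have "\<dots> = (1 - r) * kernel_ratio \<xi> p" using q1 by (simp add: field_simps)
    finally show ?thesis .
  qed
  then have "\<nu> (tarc q (p @ [b])) = (1 - r) / (of_nat q - r) * kernel_ratio \<xi> p" using q_minus_r_nonzero by (simp add: field_simps)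
  then show ?thesis using kernel_ratio_eq[of \<xi> p] by (simp add: Bc_def)
qed

lemma shell_in_sets: "shell k \<in> sets (uniform_ends q)"
  unfolding shell_def sets_uniform_ends using tarc_in_sets pref_in_verts[OF \<xi>] by blast

lemma uniform_ends_shell: "measure (uniform_ends q) (shell k) = arc_weight q k - arc_weight q (Suc k)"
proof -
  interpret prob_space "uniform_ends q" using prob_space_uniform_ends q1 by blast
  have "measure (uniform_ends q) (shell k) = measure (uniform_ends q) (tarc q (pref \<xi> k)) - measure (uniform_ends q) (tarc q (pref \<xi> (Suc k)))"
    unfolding shell_def using tarc_pref_antimono[of k "Suc k" q \<xi>] tarc_in_sets[OF pref_in_verts[OF \<xi>]]
    by (intro finite_measure_Diff) auto
  then show ?thesis using uniform_ends_tarc[OF q1 pref_in_verts[OF \<xi>]] by simp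
qed

lemma shell_disjoint: "j \<noteq> k \<Longrightarrow> shell j \<inter> shell k = {}"
proof -
  have *: "shell j \<inter> shell k = {}" if "j < k" for j k
    using tarc_pref_antimono[of "Suc j" k q \<xi>] that unfolding shell_def by auto
  assume "j \<noteq> k" then show ?thesis using *[of j k] *[of k j] by (cases "j < k") auto
qed

lemma tarc_ray_Int_shell: "tarc q (pref \<xi> n) \<inter> shell k = (if n \<le> k then shell k else {})"
proof (cases "n \<le> k")
  case True then show ?thesis using tarc_pref_antimono[of n k q \<xi>] unfolding shell_def by auto
next
  case False then show ?thesis using tarc_pref_antimono[of "Suc k" n q \<xi>] unfolding shell_def by auto
qed

lemma tarc_off_ray_subset_shell:
  assumes xv: "p @ [b] \<in> verts q" and off: "p @ [b] \<noteq> pref \<xi> (Suc (length p))"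
  shows "tarc q (p @ [b]) \<subseteq> shell (length (confE p \<xi>))"
proof
  fix \<eta> assume e: "\<eta> \<in> tarc q (p @ [b])"
  define k0 where "k0 = length (confE p \<xi>)"
  have k0p: "k0 \<le> length p" unfolding k0_def by (rule length_confE_le)
  have pe: "pref \<eta> (Suc (length p)) = p @ [b]" "\<eta> \<in> ends q" using e by (auto simp: mem_tarc_iff)
  have c1: "take k0 p = confE p \<xi>" unfolding k0_def confE_def by (rule lcp_eq_take_left[symmetric])
  have c2: "confE p \<xi> = pref \<xi> k0"
    unfolding k0_def confE_def using lcp_eq_take_right[of p "pref \<xi> (length p)"] length_lcp_le_left[of p]
    by (metis take_pref min_def)
  have "pref \<eta> k0 = take k0 (pref \<eta> (Suc (length p)))" using k0p by (simp add: take_pref min_def)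
  also have "\<dots> = take k0 p" using pe k0p by simp
  finally have in1: "\<eta> \<in> tarc q (pref \<xi> k0)" using c1 c2 pe by (simp add: mem_tarc_iff)
  have "\<eta> \<notin> tarc q (pref \<xi> (Suc k0))"
  proof
    assume "\<eta> \<in> tarc q (pref \<xi> (Suc k0))"
    then have h: "pref \<eta> (Suc k0) = pref \<xi> (Suc k0)" by (simp add: mem_tarc_iff)
    have "take (Suc k0) (p @ [b]) = pref \<eta> (Suc k0)" using pe k0p by (metis take_pref min_def Suc_le_mono)
    also have "\<dots> = take (Suc k0) (pref \<xi> (Suc (length p)))" using h k0p by (simp add: take_pref min_def)
    finally have "Suc k0 \<le> length (lcp (p @ [b]) (pref \<xi> (Suc (length p))))"
      using k0p by (subst le_length_lcp_iff) simp
    moreover have "lcp (p @ [b]) (pref \<xi> (Suc (length p))) = confE p \<xi>"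
      using confE_snoc_off_ray[OF off] by (simp add: confE_def)
    ultimately show False unfolding k0_def by simp
  qed
  then show "\<eta> \<in> shell (length (confE p \<xi>))" using in1 unfolding shell_def k0_def by simp
qed

lemma \<beta>_arc_weight: "\<beta> k * of_real w = Bc * r ^ k * of_real (real q ^ k * (real q + 1) * w)"
  by (simp add: \<beta>_def)

lemma arc_weight_diff: "real q ^ k * (real q + 1) * (arc_weight q k - arc_weight q (Suc k)) = (if k = 0 then real q else real q - 1)"
proof (cases k)
  case 0 then show ?thesis by (simp add: arc_weight_def branching_def field_simps)
next
  case (Suc m)
  have h1: "arc_weight q (Suc m) * (real q + 1) * real q ^ m = 1" by (rule arc_weight_closed[OF q1])
  have h2: "arc_weight q (Suc (Suc m)) * (real q + 1) * real q ^ Suc m = 1" by (rule arc_weight_closed[OF q1])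
  have "real q ^ k * (real q + 1) * (arc_weight q k - arc_weight q (Suc k)) =
      real q * (arc_weight q (Suc m) * (real q + 1) * real q ^ m) - arc_weight q (Suc (Suc m)) * (real q + 1) * real q ^ Suc m"
    using Suc by (simp add: algebra_simps)
  then show ?thesis using h1 h2 Suc by simp
qed

lemma \<beta>_shell: "\<beta> k * of_real (measure (uniform_ends q) (shell k)) = (if k = 0 then Bc * of_nat q else Bc * (of_nat q - 1) * r ^ k)"
  unfolding uniform_ends_shell \<beta>_arc_weight arc_weight_diff by auto

lemma mu_ray_arc: "\<mu> (tarc q (pref \<xi> n)) = \<nu> (tarc q (pref \<xi> n))"
proof -
  have t: "\<beta> k * of_real (measure (uniform_ends q) (tarc q (pref \<xi> n) \<inter> shell k)) =
     (if n \<le> k then (if k = 0 then Bc * of_nat q else Bc * (of_nat q - 1) * r ^ k) else 0)" for k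
    unfolding tarc_ray_Int_shell by (simp add: \<beta>_shell)
  show ?thesis
  proof (cases "n = 0")
    case True
    have s1: "(\<lambda>k. if 1 \<le> k then Bc * (of_nat q - 1) * r ^ k else 0) sums (Bc * (of_nat q - 1) * r ^ 1 / (1 - r))"
      by (rule geometric_tail_sums[OF rlt])
    have s2: "(\<lambda>k. if k = 0 then Bc * of_nat q else 0) sums (Bc * of_nat q)" by (rule sums_single)
    have "(\<lambda>k. (if 1 \<le> k then Bc * (of_nat q - 1) * r ^ k else 0) + (if k = 0 then Bc * of_nat q else 0))
        sums (Bc * (of_nat q - 1) * r ^ 1 / (1 - r) + Bc * of_nat q)" by (rule sums_add[OF s1 s2])
    moreover have "Bc * (of_nat q - 1) * r ^ 1 / (1 - r) + Bc * of_nat q = 1"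
    proof -
      have "(of_nat q - 1) * r + (1 - r) * of_nat q = of_nat q - r" by (simp add: algebra_simps)
      then show ?thesis using q_minus_r_nonzero one_minus_r_nonzero by (simp add: Bc_def divide_simps)
    qed
    moreover have "(\<lambda>k. (if 1 \<le> k then Bc * (of_nat q - 1) * r ^ k else 0) + (if k = 0 then Bc * of_nat q else 0)) =
        (\<lambda>k. \<beta> k * of_real (measure (uniform_ends q) (tarc q (pref \<xi> n) \<inter> shell k)))"
      unfolding t using True by (auto simp: fun_eq_iff)
    ultimately have "(\<lambda>k. \<beta> k * of_real (measure (uniform_ends q) (tarc q (pref \<xi> n) \<inter> shell k))) sums 1"
      by simp
    then show ?thesis using True nu_root_arc unfolding \<mu>_def by (simp add: sums_iff)
  next
    case False
    have "(\<lambda>k. if n \<le> k then Bc * (of_nat q - 1) * r ^ k else 0) sums (Bc * (of_nat q - 1) * r ^ n / (1 - r))"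
      by (rule geometric_tail_sums[OF rlt])
    moreover have "(\<lambda>k. if n \<le> k then Bc * (of_nat q - 1) * r ^ k else 0) =
       (\<lambda>k. \<beta> k * of_real (measure (uniform_ends q) (tarc q (pref \<xi> n) \<inter> shell k)))"
      unfolding t using False by (auto simp: fun_eq_iff)
    moreover have "Bc * (of_nat q - 1) * r ^ n / (1 - r) = \<nu> (tarc q (pref \<xi> n))"
      using nu_ray_arc[of n] False q_minus_r_nonzero one_minus_r_nonzero by (simp add: Bc_def divide_simps)
    ultimately show ?thesis unfolding \<mu>_def by (simp add: sums_iff)
  qed
qed

lemma mu_off_ray_arc:
  assumes xv: "p @ [b] \<in> verts q" and off: "p @ [b] \<noteq> pref \<xi> (Suc (length p))"
  shows "\<mu> (tarc q (p @ [b])) = \<nu> (tarc q (p @ [b]))"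
proof -
  define k0 where "k0 = length (confE p \<xi>)"
  have k0p: "k0 \<le> length p" unfolding k0_def by (rule length_confE_le)
  have sub: "tarc q (p @ [b]) \<subseteq> shell k0" using tarc_off_ray_subset_shell[OF xv off] by (simp add: k0_def)
  have inter: "tarc q (p @ [b]) \<inter> shell k = (if k = k0 then tarc q (p @ [b]) else {})" for k
    using sub shell_disjoint[of k0 k] by auto
  have t: "\<beta> k * of_real (measure (uniform_ends q) (tarc q (p @ [b]) \<inter> shell k)) =
      (if k = k0 then \<beta> k0 * of_real (arc_weight q (Suc (length p))) else 0)" for k
    unfolding inter using uniform_ends_tarc[OF q1 xv] by simp
  have "(\<lambda>k. \<beta> k * of_real (measure (uniform_ends q) (tarc q (p @ [b]) \<inter> shell k))) sums (\<beta> k0 * of_real (arc_weight q (Suc (length p))))"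
    unfolding t by (rule sums_single)
  moreover have "\<beta> k0 * of_real (arc_weight q (Suc (length p))) = \<nu> (tarc q (p @ [b]))"
  proof -
    have h: "arc_weight q (Suc (length p)) * (real q + 1) * real q ^ length p = 1" by (rule arc_weight_closed[OF q1])
    have pq: "real q ^ length p = real q ^ k0 * real q ^ (length p - k0)"
      using k0p by (simp add: power_add[symmetric])
    have "real q ^ k0 * (real q + 1) * arc_weight q (Suc (length p)) = 1 / real q ^ (length p - k0)"
      using h q1 unfolding pq by (simp add: field_simps)
    then show ?thesis unfolding \<beta>_arc_weight nu_off_ray_arc[OF xv off] k0_def by simp
  qed
  ultimately show ?thesis unfolding \<mu>_def by (simp add: sums_iff)
qed

lemma mu_tarc: assumes y: "y \<in> verts q" shows "\<mu> (tarc q y) = \<nu> (tarc q y)"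
proof (cases "y = pref \<xi> (length y)")
  case True then show ?thesis using mu_ray_arc by metis
next
  case False
  then have "y \<noteq> []" by auto
  then obtain p b where yp: "y = p @ [b]" by (metis append_butlast_last_id)
  then show ?thesis using mu_off_ray_arc[of p b] y False by simp
qed

lemma norm_\<beta>_shell_le: "norm (\<beta> k) * measure (uniform_ends q) (shell k) \<le> norm Bc * (real q + 1) * norm r ^ k"
proof -
  have "measure (uniform_ends q) (shell k) \<le> arc_weight q k"
    using uniform_ends_shell[of k] arc_weight_nonneg[of q "Suc k"] by simp
  then have "norm (\<beta> k) * measure (uniform_ends q) (shell k) \<le> norm (\<beta> k) * arc_weight q k"
    by (simp add: mult_left_mono)
  also have "\<dots> = norm Bc * norm r ^ k * (real q ^ k * (real q + 1) * arc_weight q k)"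
  proof -
    have "\<beta> k = Bc * r ^ k * of_real (real q ^ k * (real q + 1))" by (simp add: \<beta>_def)
    moreover have "norm (of_nat q + 1 :: complex) = real q + 1"
      using norm_of_nat[of "Suc q"] by (simp add: add.commute)
    ultimately show ?thesis by (simp add: norm_mult norm_power)
  qed
  also have "\<dots> \<le> norm Bc * norm r ^ k * (real q + 1)"
    by (intro mult_left_mono arc_weight_bound[OF q1]) auto
  finally show ?thesis by (simp add: algebra_simps)
qed

lemma summable_shell_bound: "summable (\<lambda>k. norm Bc * (real q + 1) * norm r ^ k)"
  using rlt by (intro summable_mult summable_geometric) simp

lemma complex_measure_mu: "complex_measure_on (bdry_borel q) \<mu>"
proof -
  have "complex_measure_on (uniform_ends q) \<mu>"
    unfolding \<mu>_def
  proof (rule complex_measure_on_series[where Mb = "\<lambda>k. norm Bc * (real q + 1) * norm r ^ k"])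
    show "finite_measure (uniform_ends q)"
      using prob_space_uniform_ends[OF q1] prob_space.finite_measure by blast
  qed (use shell_in_sets norm_\<beta>_shell_le summable_shell_bound in auto)
  then show ?thesis unfolding complex_measure_on_def by simp
qed

lemma nu_extends_to_borel: "extends_to_borel q \<nu>"
  unfolding extends_to_borel_def
  using distributions_eq_on_bdry_alg[OF distribution_if_complex_measure_on[OF complex_measure_mu] d mu_tarc]
    complex_measure_mu by blast

end

section \<open>Harmonicity of the kernels\<close>

lemma nbrs_eq: assumes x: "x \<in> verts q"
  shows "nbrs q x = (if x = [] then {} else {butlast x}) \<union> children q x"
proof
  show "nbrs q x \<subseteq> (if x = [] then {} else {butlast x}) \<union> children q x"
    by (auto simp: nbrs_def adj_def children_def)
  show "(if x = [] then {} else {butlast x}) \<union> children q x \<subseteq> nbrs q x"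
    using x butlast_in_verts[OF x] by (auto simp: nbrs_def adj_def children_def) (metis append_butlast_last_id)
qed

lemma finite_nbrs: "x \<in> verts q \<Longrightarrow> finite (nbrs q x)"
  using nbrs_eq finite_children by simp

lemma nbrs_in_verts: "z \<in> nbrs q x \<Longrightarrow> z \<in> verts q" by (simp add: nbrs_def)

definition step_to :: "(nat \<Rightarrow> nat) \<Rightarrow> nat list \<Rightarrow> nat list" where
  "step_to \<eta> x = (if x = pref \<eta> (length x) then pref \<eta> (Suc (length x)) else butlast x)"

lemma step_to_in_nbrs: assumes x: "x \<in> verts q" and \<eta>: "\<eta> \<in> ends q" shows "step_to \<eta> x \<in> nbrs q x"
proof (cases "x = pref \<eta> (length x)")
  case True
  then have "step_to \<eta> x = x @ [\<eta> (length x)]" by (simp add: step_to_def pref_Suc)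
  moreover have "x @ [\<eta> (length x)] \<in> verts q" using pref_in_verts[OF \<eta>, of "Suc (length x)"] True
    by (metis pref_Suc)
  ultimately show ?thesis using x by (simp add: nbrs_eq children_def)
next
  case False
  then have "x \<noteq> []" by auto
  then show ?thesis using False x by (simp add: step_to_def nbrs_eq)
qed

lemma nbrs_cases:
  assumes "z \<in> nbrs q x"
  obtains (child) b where "z = x @ [b]" | (parent) b where "x = z @ [b]"
  using assms by (auto simp: nbrs_def adj_def)

lemma child_eq_step_to_iff: "x @ [b] = step_to \<eta> x \<longleftrightarrow> x @ [b] = pref \<eta> (Suc (length x))"
  by (auto simp: step_to_def pref_Suc dest: arg_cong[of _ _ length])

lemma parent_eq_step_to_iff: "z = step_to \<eta> (z @ [b]) \<longleftrightarrow> z @ [b] \<noteq> pref \<eta> (Suc (length z))"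
  by (auto simp: step_to_def dest: arg_cong[of _ _ length])

lemma hor_nbrs:
  assumes "z \<in> nbrs q x"
  shows "hor z \<omega> = (if z = step_to \<omega> x then hor x \<omega> - 1 else hor x \<omega> + 1)"
  using assms
proof (cases rule: nbrs_cases)
  case (child b)
  then show ?thesis using hor_snoc[of x b \<omega>] child_eq_step_to_iff[of x b \<omega>] by simp
next
  case (parent b)
  then show ?thesis using hor_snoc[of z b \<omega>] parent_eq_step_to_iff[of z \<omega> b] by auto
qed

lemma edge_kernel_snoc:
  assumes W: "\<forall>u v. W u v \<noteq> 0"
  shows "edge_kernel W (p @ [b]) \<eta> = (if p @ [b] = pref \<eta> (Suc (length p))
    then edge_kernel W p \<eta> / W p (p @ [b]) else W (p @ [b]) p * edge_kernel W p \<eta>)"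
proof (cases "p @ [b] = pref \<eta> (Suc (length p))")
  case True
  moreover have "pref \<eta> (length p) = p" using True by (simp add: pref_Suc)
  ultimately show ?thesis
    using edge_kernel_pref[of W \<eta> "Suc (length p)"] edge_kernel_pref[of W \<eta> "length p"] W
      geo_w_nonzero[OF W, of "[]" p]
    by (simp add: geo_w_root_snoc flip: True)
next
  case False
  then show ?thesis using edge_kernel_snoc_off_ray by simp
qed

lemma edge_kernel_nbrs:
  assumes z: "z \<in> nbrs q x" and W: "\<forall>u v. W u v \<noteq> 0"
  shows "edge_kernel W z \<eta> = (if z = step_to \<eta> x then edge_kernel W x \<eta> / W x z else W z x * edge_kernel W x \<eta>)"
  using z
proof (cases rule: nbrs_cases)
  case (child b)
  then show ?thesis using edge_kernel_snoc[OF W, of x b \<eta>] child_eq_step_to_iff[of x b \<eta>] by simp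
next
  case (parent b)
  then show ?thesis
    using edge_kernel_snoc[OF W, of z b \<eta>] parent_eq_step_to_iff[of z \<eta> b] W by (auto simp: field_simps)
qed

lemma card_children: assumes x: "x \<in> verts q"
  shows "card (children q x) = (if x = [] then Suc q else q)"
proof -
  have "children q x = (\<lambda>b. x @ [b]) ` {b. b \<le> q \<and> (x = [] \<or> b \<noteq> last x)}"
    using x snoc_in_verts_iff[of "[]" _ q] by (auto simp: children_def snoc_in_verts_iff)
  moreover have "inj (\<lambda>b. x @ [b])" by (auto simp: inj_def)
  ultimately have "card (children q x) = card {b. b \<le> q \<and> (x = [] \<or> b \<noteq> last x)}"
    by (simp add: card_image inj_on_subset)
  moreover have "card {b. b \<le> q \<and> (x = [] \<or> b \<noteq> last x)} = (if x = [] then Suc q else q)"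
  proof (cases "x = []")
    case True then show ?thesis by simp
  next
    case False
    then have "last x \<le> q" using x unfolding verts_def by (simp add: last_conv_nth)
    then have "{b. b \<le> q \<and> (x = [] \<or> b \<noteq> last x)} = {..q} - {last x}" using False by auto
    then show ?thesis using False \<open>last x \<le> q\<close> by simp
  qed
  ultimately show ?thesis by simp
qed

lemma card_nbrs: assumes x: "x \<in> verts q" shows "card (nbrs q x) = Suc q"
proof (cases "x = []")
  case True then show ?thesis using card_children[OF x] nbrs_eq[OF x] by simp
next
  case False
  have "butlast x \<notin> children q x" using length_children by fastforce
  then show ?thesis using False card_children[OF x] finite_children by (simp add: nbrs_eq[OF x])
qed

lemma trans_prob_nbrs:
  assumes z: "z \<in> nbrs q x"
  shows "trans_prob q \<alpha> \<omega> x z = (if z = step_to \<omega> x then 1 - \<alpha> else \<alpha> / real q)"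
proof -
  have "adj x z" using z by (simp add: nbrs_def)
  then show ?thesis using hor_nbrs[OF z] by (auto simp: trans_prob_def)
qed

lemma edge_w_from_nbr:
  assumes z: "z \<in> nbrs q x"
  shows "edge_w P M \<omega> z x = (if z = step_to \<omega> x then P else M)"
  using hor_nbrs[OF z] by (auto simp: edge_w_def)

lemma edge_w_to_nbr:
  assumes z: "z \<in> nbrs q x"
  shows "edge_w P M \<omega> x z = (if z = step_to \<omega> x then M else P)"
  using hor_nbrs[OF z] by (auto simp: edge_w_def)

lemma harmonic_weight_sum:
  fixes a c lam :: complex and \<alpha> :: real and N :: "'a set"
  assumes fin: "finite N" and cardN: "card N = Suc q" and vN: "v \<in> N" and wN: "w \<in> N"
    and q: "q \<ge> 1" and a: "a \<noteq> 0" and c: "c \<noteq> 0"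
    and c\<alpha>: "of_real (1 - \<alpha>) * c = of_real (\<alpha> / real q)"
    and quad: "of_real \<alpha> * a + of_real (1 - \<alpha>) / a = lam"
  shows "(\<Sum>z\<in>N. of_real (if z = w then 1 - \<alpha> else \<alpha> / real q) *
      (if z = v then 1 / (if z = w then a else c * a) else if z = w then c * a else a)) = lam"
    (is "(\<Sum>z\<in>N. ?g z) = _")
proof -
  have rest: "(\<Sum>z\<in>N - {v, w}. ?g z) = of_nat (card (N - {v, w})) * (of_real (\<alpha> / real q) * a)"
    by (simp add: sum_constant)
  show ?thesis
  proof (cases "v = w")
    case True
    have "(\<Sum>z\<in>N. ?g z) = ?g v + (\<Sum>z\<in>N - {v, w}. ?g z)"
      using sum.remove[OF fin vN, of ?g] True by simp
    also have "\<dots> = of_real (1 - \<alpha>) / a + of_nat q * (of_real (\<alpha> / real q) * a)"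
      using rest True cardN vN fin by simp
    finally show ?thesis using q quad by (simp add: field_simps)
  next
    case False
    have "(\<Sum>z\<in>N. ?g z) = ?g v + ?g w + (\<Sum>z\<in>N - {v, w}. ?g z)"
      using sum.remove[OF fin vN, of ?g] sum.remove[of "N - {v}" w ?g] fin wN False
      by (simp add: insert_Diff_if Diff_insert2 [symmetric] algebra_simps)
    also have "\<dots> = of_real (\<alpha> / real q) / (c * a) + of_real (1 - \<alpha>) * (c * a)
        + of_nat (q - 1) * (of_real (\<alpha> / real q) * a)"
      using rest False cardN vN wN fin by (simp add: card_Diff_subset)
    also have "\<dots> = of_real (1 - \<alpha>) / a + (of_real (\<alpha> / real q) * a + of_nat (q - 1) * (of_real (\<alpha> / real q) * a))"
    proof -
      have "of_real (\<alpha> / real q) / (c * a) = of_real (1 - \<alpha>) * c / (c * a)" by (simp only: c\<alpha>)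
      also have "\<dots> = of_real (1 - \<alpha>) / a" using c by simp
      finally have e1: "of_real (\<alpha> / real q) / (c * a) = of_real (1 - \<alpha>) / a" .
      have e2: "of_real (1 - \<alpha>) * (c * a) = of_real (\<alpha> / real q) * a" by (metis c\<alpha> mult.assoc)
      show ?thesis by (simp only: e1 e2 add.assoc)
    qed
    also have "\<dots> = of_real (1 - \<alpha>) / a + of_real \<alpha> * a"
      using q by (simp add: field_simps of_nat_diff)
    finally show ?thesis using quad by (simp add: algebra_simps)
  qed
qed

lemma edge_kernel_harmonic:
  fixes lam a c :: complex and \<alpha> :: real and \<omega> :: "nat \<Rightarrow> nat"
  defines "W \<equiv> edge_w (c * a) a \<omega>"
  assumes q: "q \<ge> 1" and x: "x \<in> verts q" and \<omega>: "\<omega> \<in> ends q" and \<eta>: "\<eta> \<in> ends q"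
    and a: "a \<noteq> 0" and \<alpha>: "0 < \<alpha>"
    and c\<alpha>: "of_real (1 - \<alpha>) * c = of_real (\<alpha> / real q)"
    and quad: "of_real \<alpha> * a + of_real (1 - \<alpha>) / a = lam"
  shows "(\<Sum>z\<in>nbrs q x. of_real (trans_prob q \<alpha> \<omega> x z) * edge_kernel W z \<eta>) = lam * edge_kernel W x \<eta>"
proof -
  have c: "c \<noteq> 0" using c\<alpha> \<alpha> q by auto
  have W_nonzero: "\<forall>u v. W u v \<noteq> 0" using c a by (simp add: W_def edge_w_def)
  define v where "v = step_to \<eta> x"
  define w where "w = step_to \<omega> x"
  define g where "g z = of_real (if z = w then 1 - \<alpha> else \<alpha> / real q) *
     (if z = v then 1 / (if z = w then a else c * a) else if z = w then c * a else a)" for z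
  have "of_real (trans_prob q \<alpha> \<omega> x z) * edge_kernel W z \<eta> = edge_kernel W x \<eta> * g z" if z: "z \<in> nbrs q x" for z
  proof -
    have "edge_kernel W z \<eta> = (if z = v then edge_kernel W x \<eta> / W x z else W z x * edge_kernel W x \<eta>)"
      using edge_kernel_nbrs[OF z W_nonzero] by (simp add: v_def)
    moreover have "W x z = (if z = w then a else c * a)" "W z x = (if z = w then c * a else a)"
      using edge_w_from_nbr[OF z] edge_w_to_nbr[OF z] by (simp_all add: W_def w_def)
    moreover have "trans_prob q \<alpha> \<omega> x z = (if z = w then 1 - \<alpha> else \<alpha> / real q)"
      using trans_prob_nbrs[OF z] by (simp add: w_def)
    ultimately show ?thesis by (cases "z = v"; cases "z = w") (simp_all add: g_def)
  qed
  then have "(\<Sum>z\<in>nbrs q x. of_real (trans_prob q \<alpha> \<omega> x z) * edge_kernel W z \<eta>) = edge_kernel W x \<eta> * (\<Sum>z\<in>nbrs q x. g z)"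
    by (simp add: sum_distrib_left)
  also have "(\<Sum>z\<in>nbrs q x. g z) = lam" unfolding g_def
    using finite_nbrs[OF x] card_nbrs[OF x] step_to_in_nbrs[OF x \<eta>] step_to_in_nbrs[OF x \<omega>] q a c c\<alpha> quad
    by (intro harmonic_weight_sum) (auto simp: v_def w_def)
  finally show ?thesis by simp
qed

section \<open>The spectral parameter\<close>

definition pos_real :: "complex \<Rightarrow> bool" where "pos_real z \<longleftrightarrow> (\<exists>t>0. z = of_real t)"

lemma pos_real_mult: "pos_real a \<Longrightarrow> pos_real b \<Longrightarrow> pos_real (a * b)"
  unfolding pos_real_def by (metis mult_pos_pos of_real_mult)
lemma pos_real_div: "pos_real a \<Longrightarrow> pos_real b \<Longrightarrow> pos_real (a / b)"
  unfolding pos_real_def by (metis divide_pos_pos of_real_divide)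
lemma pos_real_1: "pos_real 1" unfolding pos_real_def by (intro exI[of _ 1]) simp
lemma pos_real_prod: "finite S \<Longrightarrow> (\<And>i. i \<in> S \<Longrightarrow> pos_real (f i)) \<Longrightarrow> pos_real (prod f S)"
  by (induction S rule: finite_induct) (auto intro: pos_real_mult pos_real_1)
lemma pos_real_Re: "pos_real z \<Longrightarrow> z = of_real (Re z) \<and> Re z > 0"
  unfolding pos_real_def by auto

lemma pos_real_geo_w: "\<forall>u v. pos_real (W u v) \<Longrightarrow> pos_real (geo_w W x y)"
  unfolding geo_w_def Let_def by (intro pos_real_mult pos_real_prod) auto

lemma pos_real_edge_kernel: "\<forall>u v. pos_real (W u v) \<Longrightarrow> pos_real (edge_kernel W x \<eta>)"
  unfolding edge_kernel_def by (intro pos_real_div pos_real_geo_w)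

lemma pos_real_edge_w: "pos_real P \<Longrightarrow> pos_real M \<Longrightarrow> \<forall>u v. pos_real (edge_w P M \<omega> u v)"
  by (simp add: edge_w_def)

lemma square_eq_of_real_cases:
  fixes z :: complex assumes "z\<^sup>2 = of_real v" "v \<ge> 0"
  shows "z = of_real (sqrt v) \<or> z = - of_real (sqrt v)"
proof -
  have e1: "(z - of_real (sqrt v)) * (z + of_real (sqrt v)) = z * z - of_real (sqrt v) * of_real (sqrt v)"
    by algebra
  have e2: "of_real (sqrt v) * of_real (sqrt v) = (of_real v :: complex)" using assms(2)
    by (metis of_real_mult real_sqrt_mult_self abs_of_nonneg)
  have "(z - of_real (sqrt v)) * (z + of_real (sqrt v)) = z\<^sup>2 - of_real v"
    using e1 e2 by (simp add: power2_eq_square)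
  then have "(z - of_real (sqrt v)) * (z + of_real (sqrt v)) = 0" using assms(1) by simp
  then show ?thesis by (auto simp: add_eq_0_iff2)
qed

lemma in_real_interval_if_square:
  fixes z :: complex
  assumes "z\<^sup>2 = of_real v" "0 \<le> v" "v \<le> \<rho>\<^sup>2" "0 \<le> \<rho>"
  shows "z \<in> of_real ` {-\<rho>..\<rho>}"
proof -
  have "sqrt v \<le> \<rho>" using assms(3,4) real_sqrt_le_mono[of v "\<rho>\<^sup>2"] by simp
  moreover have "0 \<le> sqrt v" using assms(2) by simp
  ultimately have "sqrt v \<in> {-\<rho>..\<rho>}" "- sqrt v \<in> {-\<rho>..\<rho>}"
    unfolding atLeastAtMost_iff by linarith+
  then show ?thesis using square_eq_of_real_cases[OF assms(1,2)] by force
qed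

definition up_ratio :: "nat \<Rightarrow> real \<Rightarrow> complex" where
  "up_ratio q \<alpha> = of_real (\<alpha> / ((1 - \<alpha>) * real q))"

lemma Fp_eq_up_ratio: "Fp q \<alpha> lam = up_ratio q \<alpha> * Fm \<alpha> lam"
  by (simp add: Fp_def up_ratio_def)

lemma Fpt_eq_up_ratio: "Fpt q \<alpha> lam = up_ratio q \<alpha> * Fmt \<alpha> lam"
  by (simp add: Fpt_def up_ratio_def)

lemma one_minus_mult_up_ratio:
  assumes "\<alpha> \<noteq> 1"
  shows "of_real (1 - \<alpha>) * up_ratio q \<alpha> = of_real (\<alpha> / real q)"
proof -
  have "(1 - \<alpha>) * (\<alpha> / ((1 - \<alpha>) * real q)) = \<alpha> / real q" using assms by simp
  then show ?thesis unfolding up_ratio_def by (metis of_real_mult)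
qed

locale spectral_parameter =
  fixes \<alpha> \<rho> :: real and lam :: complex
  assumes \<alpha>0: "0 < \<alpha>" and \<alpha>1: "\<alpha> < 1" and \<rho>: "\<rho> = 2 * sqrt (\<alpha> * (1 - \<alpha>))"
    and lamr: "lam \<notin> complex_of_real ` {-\<rho>..\<rho>}"
begin

lemma rho_sq: "\<rho>\<^sup>2 = 4 * (\<alpha> * (1 - \<alpha>))" "\<rho> \<ge> 0"
proof -
  have ab: "\<alpha> * (1 - \<alpha>) \<ge> 0" using \<alpha>0 \<alpha>1 by simp
  show "\<rho>\<^sup>2 = 4 * (\<alpha> * (1 - \<alpha>))" unfolding \<rho> power_mult_distrib using real_sqrt_pow2[OF ab] by simp
  show "\<rho> \<ge> 0" unfolding \<rho> using ab by simp
qed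

lemma lam_nonzero: "lam \<noteq> 0"
proof
  assume "lam = 0"
  then have "lam = complex_of_real 0" by simp
  moreover have "(0::real) \<in> {-\<rho>..\<rho>}" using rho_sq(2) by simp
  ultimately show False using lamr by blast
qed

definition disc_root where "disc_root = csqrt (1 - 4 * of_real (\<alpha> * (1 - \<alpha>)) / lam\<^sup>2)"

text \<open>\<open>Re (csqrt w) = 0\<close> only for real \<open>w \<le> 0\<close>, which happens exactly for \<open>lam \<in> [-\<rho>, \<rho>]\<close>.\<close>

lemma Re_disc_root_pos: "Re disc_root > 0"
proof (rule ccontr)
  assume "\<not> Re disc_root > 0"
  then have "Re disc_root = 0" using Re_csqrt[of "1 - 4 * of_real (\<alpha> * (1 - \<alpha>)) / lam\<^sup>2"]
    by (simp add: disc_root_def)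
  define t where "t = Im disc_root"
  have "disc_root = \<i> * of_real t" using \<open>Re disc_root = 0\<close> by (simp add: t_def complex_eq_iff)
  then have "disc_root\<^sup>2 = - of_real (t\<^sup>2)" by (simp add: power_mult_distrib)
  moreover have "disc_root\<^sup>2 = 1 - 4 * of_real (\<alpha> * (1 - \<alpha>)) / lam\<^sup>2" by (simp add: disc_root_def)
  ultimately have "4 * of_real (\<alpha> * (1 - \<alpha>)) / lam\<^sup>2 = of_real (1 + t\<^sup>2)" by (simp add: algebra_simps)
  then have "4 * of_real (\<alpha> * (1 - \<alpha>)) = lam\<^sup>2 * of_real (1 + t\<^sup>2)"
    using lam_nonzero by (simp add: field_simps)
  moreover have t: "1 + t\<^sup>2 > 0" by (simp add: add_pos_nonneg)
  ultimately have "lam\<^sup>2 = of_real (4 * (\<alpha> * (1 - \<alpha>)) / (1 + t\<^sup>2))"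
    by (simp add: field_simps del: of_real_add)
  moreover have "4 * (\<alpha> * (1 - \<alpha>)) / (1 + t\<^sup>2) \<le> \<rho>\<^sup>2"
    using \<alpha>0 \<alpha>1 rho_sq(1) t by (simp add: divide_le_eq)
  ultimately have "lam \<in> of_real ` {-\<rho>..\<rho>}"
    using \<alpha>0 \<alpha>1 t rho_sq(2) by (intro in_real_interval_if_square) auto
  then show False using lamr by blast
qed

lemma Fm_eq_disc_root: "Fm \<alpha> lam = lam / (2 * of_real \<alpha>) * (1 - disc_root)" by (simp add: Fm_def disc_root_def)
lemma Fmt_eq_disc_root: "Fmt \<alpha> lam = lam / (2 * of_real \<alpha>) * (1 + disc_root)" by (simp add: Fmt_def disc_root_def)

lemma Fm_Fmt_product: "Fm \<alpha> lam * Fmt \<alpha> lam = of_real ((1 - \<alpha>) / \<alpha>)"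
proof -
  have h1: "Fm \<alpha> lam * Fmt \<alpha> lam = lam\<^sup>2 / (4 * of_real \<alpha> ^ 2) * (1 - disc_root\<^sup>2)"
    unfolding Fm_eq_disc_root Fmt_eq_disc_root by (simp add: power2_eq_square field_simps)
  have h2: "1 - disc_root\<^sup>2 = 4 * of_real (\<alpha> * (1 - \<alpha>)) / lam\<^sup>2" by (simp add: disc_root_def)
  have "Fm \<alpha> lam * Fmt \<alpha> lam = lam\<^sup>2 / (4 * of_real \<alpha> ^ 2) * (4 * of_real (\<alpha> * (1 - \<alpha>)) / lam\<^sup>2)"
    using h1 h2 by simp
  also have "\<dots> = of_real ((1 - \<alpha>) / \<alpha>)" using lam_nonzero \<alpha>0 by (simp add: field_simps power2_eq_square)
  finally show ?thesis .
qed

lemma Fm_nonzero: "Fm \<alpha> lam \<noteq> 0" and Fmt_nonzero: "Fmt \<alpha> lam \<noteq> 0"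
  using Fm_Fmt_product \<alpha>0 \<alpha>1 by (auto simp: field_simps)

lemma norm_Fm_less_norm_Fmt: "norm (Fm \<alpha> lam) < norm (Fmt \<alpha> lam)"
proof -
  have "(norm (1 - disc_root))\<^sup>2 < (norm (1 + disc_root))\<^sup>2"
    using Re_disc_root_pos by (simp only: cmod_power2) (simp add: power2_eq_square algebra_simps)
  then have "norm (1 - disc_root) < norm (1 + disc_root)" by (rule power_less_imp_less_base) simp
  moreover have "norm (lam / (2 * of_real \<alpha>)) > 0" using lam_nonzero \<alpha>0 by simp
  ultimately show ?thesis unfolding Fm_eq_disc_root Fmt_eq_disc_root norm_mult by simp
qed

lemma Fm_plus_Fmt: "Fm \<alpha> lam + Fmt \<alpha> lam = lam / of_real \<alpha>"
  unfolding Fm_eq_disc_root Fmt_eq_disc_root using \<alpha>0 by (simp add: field_simps)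

lemma Fm_quadratic: "of_real \<alpha> * Fm \<alpha> lam + of_real (1 - \<alpha>) / Fm \<alpha> lam = lam"
proof -
  have "of_real (1 - \<alpha>) / Fm \<alpha> lam = of_real \<alpha> * Fmt \<alpha> lam"
    using Fm_Fmt_product Fm_nonzero \<alpha>0 by (simp add: field_simps)
  then show ?thesis using Fm_plus_Fmt \<alpha>0 by (simp add: field_simps)
qed

lemma Fmt_quadratic: "of_real \<alpha> * Fmt \<alpha> lam + of_real (1 - \<alpha>) / Fmt \<alpha> lam = lam"
proof -
  have "of_real (1 - \<alpha>) / Fmt \<alpha> lam = of_real \<alpha> * Fm \<alpha> lam"
    using Fm_Fmt_product Fmt_nonzero \<alpha>0 by (simp add: field_simps)
  then show ?thesis using Fm_plus_Fmt \<alpha>0 by (simp add: field_simps)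
qed

lemma kernel_pair_Fm_Fmt:
  assumes "q \<ge> 1"
  shows "kernel_pair q (up_ratio q \<alpha>) (Fm \<alpha> lam) (Fmt \<alpha> lam)"
proof
  have "up_ratio q \<alpha> * (Fm \<alpha> lam * Fmt \<alpha> lam) = 1 / of_nat q"
    unfolding Fm_Fmt_product using assms \<alpha>0 \<alpha>1 by (simp add: up_ratio_def field_simps)
  then show "up_ratio q \<alpha> * Fm \<alpha> lam * Fmt \<alpha> lam = 1 / of_nat q" by (simp only: mult.assoc)
qed (use assms Fm_nonzero Fmt_nonzero in auto)

lemma kernel_pair_Fmt_Fm: "q \<ge> 1 \<Longrightarrow> kernel_pair q (up_ratio q \<alpha>) (Fmt \<alpha> lam) (Fm \<alpha> lam)"
  using kernel_pair_Fm_Fmt unfolding kernel_pair_def by (simp add: mult_ac)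

lemma represented_kernel_Fm_Fmt:
  assumes "q \<ge> 1" "\<xi> \<in> ends q" "distribution q \<nu>"
    and "\<forall>x\<in>verts q. Kkert q \<alpha> \<omega> lam x \<xi> = dist_integral q \<nu> (Kker q \<alpha> \<omega> lam x)"
  shows "represented_kernel q \<omega> (up_ratio q \<alpha>) (Fm \<alpha> lam) (Fmt \<alpha> lam) \<nu> \<xi>"
  using assms kernel_pair_Fm_Fmt[OF assms(1)]
  unfolding represented_kernel_def represented_kernel_axioms_def
    kernel_pair.W_def[OF kernel_pair_Fm_Fmt[OF assms(1)]] kernel_pair.W'_def[OF kernel_pair_Fm_Fmt[OF assms(1)]]
    Kker_eq_edge_kernel Kkert_eq_edge_kernel Fp_eq_up_ratio Fpt_eq_up_ratio
  by blast

lemma represented_kernel_Fmt_Fm: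
  assumes "q \<ge> 1" "\<xi> \<in> ends q" "distribution q \<nu>"
    and "\<forall>x\<in>verts q. Kker q \<alpha> \<omega> lam x \<xi> = dist_integral q \<nu> (Kkert q \<alpha> \<omega> lam x)"
  shows "represented_kernel q \<omega> (up_ratio q \<alpha>) (Fmt \<alpha> lam) (Fm \<alpha> lam) \<nu> \<xi>"
  using assms kernel_pair_Fmt_Fm[OF assms(1)]
  unfolding represented_kernel_def represented_kernel_axioms_def
    kernel_pair.W_def[OF kernel_pair_Fmt_Fm[OF assms(1)]] kernel_pair.W'_def[OF kernel_pair_Fmt_Fm[OF assms(1)]]
    Kker_eq_edge_kernel Kkert_eq_edge_kernel Fp_eq_up_ratio Fpt_eq_up_ratio
  by blast

lemma pos_real_Fm_Fmt:
  assumes "lam \<in> \<real>" "Re lam > \<rho>"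
  shows "pos_real (Fm \<alpha> lam)" "pos_real (Fmt \<alpha> lam)"
proof -
  define l where "l = Re lam"
  have lam_l: "lam = of_real l" using assms(1) by (simp add: l_def complex_is_Real_iff complex_eq_iff)
  have l: "l > 0" "\<rho>\<^sup>2 < l\<^sup>2" using assms(2) rho_sq(2) by (auto simp: l_def intro!: power_strict_mono)
  define w where "w = 1 - 4 * (\<alpha> * (1 - \<alpha>)) / l\<^sup>2"
  have w: "0 < w" "w < 1" using l rho_sq(1) \<alpha>0 \<alpha>1 by (simp_all add: w_def field_simps)
  have "disc_root = csqrt (of_real w)" unfolding disc_root_def by (simp add: w_def lam_l)
  then have disc_root: "disc_root = of_real (sqrt w)" using w by (simp add: csqrt_of_real)
  have "Fm \<alpha> lam = of_real (l / (2 * \<alpha>) * (1 - sqrt w))" "Fmt \<alpha> lam = of_real (l / (2 * \<alpha>) * (1 + sqrt w))"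
    using Fm_eq_disc_root[unfolded disc_root] Fmt_eq_disc_root[unfolded disc_root] unfolding lam_l
    by simp_all
  moreover have "0 < l / (2 * \<alpha>) * (1 - sqrt w)" using l w \<alpha>0 by simp
  moreover have "0 < l / (2 * \<alpha>) * (1 + sqrt w)"
    using l \<alpha>0 w by (intro mult_pos_pos divide_pos_pos) (auto intro: add_pos_nonneg)
  ultimately show "pos_real (Fm \<alpha> lam)" "pos_real (Fmt \<alpha> lam)" unfolding pos_real_def by blast+
qed

end

locale positive_representation = contracting_representation +
  fixes \<alpha> :: real and lam :: complex
  assumes q2: "q \<ge> 2" and \<omega>: "\<omega> \<in> ends q" and \<alpha>0: "0 < \<alpha>" and \<alpha>1: "\<alpha> < 1"
    and c\<alpha>: "of_real (1 - \<alpha>) * c = of_real (\<alpha> / real q)"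
    and quad: "of_real \<alpha> * a + of_real (1 - \<alpha>) / a = lam"
    and quad': "of_real \<alpha> * a' + of_real (1 - \<alpha>) / a' = lam"
    and pa: "pos_real a" and pa': "pos_real a'"
begin

lemma pos_real_c: "pos_real c"
proof -
  have "of_real (1 - \<alpha>) \<noteq> (0 :: complex)" using \<alpha>1 by simp
  then have "c = of_real (1 - \<alpha>) * c / of_real (1 - \<alpha>)" by simp
  also have "\<dots> = of_real (\<alpha> / real q) / of_real (1 - \<alpha>)" by (simp only: c\<alpha>)
  finally have "c = of_real (\<alpha> / real q / (1 - \<alpha>))" by (simp only: of_real_divide)
  moreover have "\<alpha> / real q / (1 - \<alpha>) > 0" using \<alpha>0 \<alpha>1 q1 by simp
  ultimately show ?thesis unfolding pos_real_def by blast
qed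

lemma pos_real_W: "\<forall>u v. pos_real (W u v)"
  unfolding W_def using pos_real_c pa by (intro pos_real_edge_w pos_real_mult)

lemma pos_real_W': "\<forall>u v. pos_real (W' u v)"
  unfolding W'_def using pos_real_c pa' by (intro pos_real_edge_w pos_real_mult)

lemma lam_real: "lam = of_real (Re lam)"
proof -
  obtain t where "a = of_real t" using pa unfolding pos_real_def by blast
  then have "lam = of_real (\<alpha> * t + (1 - \<alpha>) / t)"
    unfolding of_real_add of_real_mult of_real_divide using quad by simp
  then show ?thesis by simp
qed

definition rr where "rr = Re r"

lemma r_eq_rr: "r = of_real rr" "0 < rr"
  using pos_real_Re[OF pos_real_div[OF pa pa']] by (simp_all add: rr_def r_def)

lemma rr_less_1: "rr < 1" using rlt r_eq_rr by simp

definition Bcr where "Bcr = (1 - rr) / (real q - rr)"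
definition \<beta>r where "\<beta>r k = Bcr * rr ^ k * real q ^ k * (real q + 1)"

lemma q_minus_rr_pos: "real q - rr > 0" using q2 rr_less_1 by simp
lemma Bcr_pos: "Bcr > 0" unfolding Bcr_def using q_minus_rr_pos rr_less_1 by simp

lemma Bc_eq_of_real: "Bc = of_real Bcr" unfolding Bc_def Bcr_def r_eq_rr by simp
lemma \<beta>_eq_of_real: "\<beta> k = of_real (\<beta>r k)" unfolding \<beta>_def \<beta>r_def Bc_eq_of_real r_eq_rr by simp
lemma \<beta>r_nonneg: "\<beta>r k \<ge> 0" unfolding \<beta>r_def using Bcr_pos r_eq_rr by simp

lemma \<beta>r_shell_bound: "\<beta>r k * measure (uniform_ends q) (shell k) \<le> norm Bc * (real q + 1) * norm r ^ k"
  using norm_\<beta>_shell_le[of k] \<beta>r_nonneg[of k] by (simp add: \<beta>_eq_of_real)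

lemma summable_\<beta>r_shell:
  assumes A: "A \<in> sets (uniform_ends q)"
  shows "summable (\<lambda>k. \<beta>r k * measure (uniform_ends q) (A \<inter> shell k))"
proof (rule summable_comparison_test'[OF summable_shell_bound])
  interpret prob_space "uniform_ends q" using prob_space_uniform_ends q1 by blast
  fix k
  have "measure (uniform_ends q) (A \<inter> shell k) \<le> measure (uniform_ends q) (shell k)"
    using A shell_in_sets by (intro finite_measure_mono) auto
  then show "norm (\<beta>r k * measure (uniform_ends q) (A \<inter> shell k)) \<le> norm Bc * (real q + 1) * norm r ^ k"
    using \<beta>r_shell_bound[of k] \<beta>r_nonneg[of k] mult_left_mono by fastforce
qed

lemma mu_eq_of_real:
  "A \<in> sets (uniform_ends q) \<Longrightarrow> \<mu> A = of_real (\<Sum>k. \<beta>r k * measure (uniform_ends q) (A \<inter> shell k))"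
  unfolding \<mu>_def \<beta>_eq_of_real by (subst suminf_of_real[OF summable_\<beta>r_shell]) auto

lemma pos_real_nu: assumes y: "y \<in> verts q" shows "pos_real (\<nu> (tarc q y))"
proof (cases "y = pref \<xi> (length y)")
  case True
  show ?thesis
  proof (cases "length y = 0")
    case True then show ?thesis using nu_root_arc pos_real_1 by simp
  next
    case False
    then have "\<nu> (tarc q y) = (of_nat q - 1) * r ^ length y / (of_nat q - r)"
      using nu_ray_arc[of "length y"] True by (metis One_nat_def Suc_leI neq0_conv)
    also have "\<dots> = of_real ((real q - 1) * rr ^ length y / (real q - rr))" unfolding r_eq_rr by simp
    finally show ?thesis unfolding pos_real_def using q2 q_minus_rr_pos r_eq_rr
      by (intro exI[of _ "(real q - 1) * rr ^ length y / (real q - rr)"]) auto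
  qed
next
  case False
  then obtain p b where "y = p @ [b]" by (metis append_butlast_last_id pref_0 list.size(3))
  then have "\<nu> (tarc q y) = Bc * r ^ length (confE p \<xi>) / of_nat q ^ (length p - length (confE p \<xi>))"
    using nu_off_ray_arc[of p b] y False by simp
  also have "\<dots> = of_real (Bcr * rr ^ length (confE p \<xi>) / real q ^ (length p - length (confE p \<xi>)))"
    unfolding Bc_eq_of_real r_eq_rr by simp
  finally show ?thesis unfolding pos_real_def using Bcr_pos r_eq_rr q1
    by (intro exI[of _ "Bcr * rr ^ length (confE p \<xi>) / real q ^ (length p - length (confE p \<xi>))"]) auto
qed

lemma prob_measure_mu:
  obtains M where "prob_space M" "space M = ends q" "sets M = sets (bdry_borel q)"
    "\<And>A. A \<in> sets (bdry_borel q) \<Longrightarrow> \<mu> A = of_real (measure M A)"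
proof -
  have "of_real (\<Sum>k. \<beta>r k * measure (uniform_ends q) (space (uniform_ends q) \<inter> shell k)) = \<mu> (tarc q (pref \<xi> 0))"
    using mu_eq_of_real[of "space (uniform_ends q)"] sets.top[of "uniform_ends q"]
    by (simp add: space_uniform_ends tarc_Nil)
  also have "\<dots> = 1" using mu_ray_arc[of 0] nu_root_arc by simp
  finally have "(\<Sum>k. \<beta>r k * measure (uniform_ends q) (space (uniform_ends q) \<inter> shell k)) = 1" by simp
  from prob_space_series_density[OF prob_space_uniform_ends[OF q1] shell_in_sets \<beta>r_nonneg
      \<beta>r_shell_bound summable_shell_bound this]
  show thesis using that mu_eq_of_real by (auto simp: space_uniform_ends)
qed

lemma nu_prob_measure_full_support:
  "\<exists>M. prob_space M \<and> space M = ends q \<and> sets M = sets (bdry_borel q) \<and>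
       (\<forall>A\<in>bdry_alg q. \<nu> A = complex_of_real (measure M A)) \<and>
       (\<forall>U. openin (bdry_top q) U \<and> U \<noteq> {} \<longrightarrow> measure M U > 0)"
proof -
  obtain M where M: "prob_space M" "space M = ends q" "sets M = sets (bdry_borel q)"
    and agree: "\<And>A. A \<in> sets (bdry_borel q) \<Longrightarrow> \<mu> A = of_real (measure M A)"
    using prob_measure_mu by blast
  have alg: "\<forall>A\<in>bdry_alg q. \<mu> A = \<nu> A"
    using distributions_eq_on_bdry_alg[OF distribution_if_complex_measure_on[OF complex_measure_mu] d mu_tarc] .
  have "measure M U > 0" if U: "openin (bdry_top q) U" "U \<noteq> {}" for U
  proof -
    interpret prob_space M by (rule M(1))
    obtain y where y: "y \<in> verts q" "tarc q y \<subseteq> U" using openin_bdry_top_arc[OF U(1)] U(2) by blast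
    obtain t where t: "t > 0" "\<nu> (tarc q y) = of_real t" using pos_real_nu[OF y(1)] unfolding pos_real_def by blast
    have "of_real (measure M (tarc q y)) = \<nu> (tarc q y)"
      using agree[OF tarc_in_sets[OF y(1)]] mu_tarc[OF y(1)] by simp
    then have "measure M (tarc q y) = t" using t by simp
    moreover have "measure M (tarc q y) \<le> measure M U"
      using y(2) openin_in_sets[OF U(1)] tarc_in_sets[OF y(1)] M(3) by (intro finite_measure_mono) auto
    ultimately show ?thesis using t by simp
  qed
  then show ?thesis using M agree alg bdry_alg_in_sets by (intro exI[of _ M]) auto
qed

text \<open>\<open>G_on A x = \<integral>\<^sub>A K(x, \<cdot>) d\<nu>\<close>, used for the arc of the first vertex \<open>\<xi>\<^sub>1\<close> of \<open>\<xi>\<close> and for its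
  complement.\<close>

definition xi1 where "xi1 = pref \<xi> 1"

definition G_on where
  "G_on A x = level_sum q \<nu> (\<lambda>\<eta>. indicator A \<eta> * edge_kernel W x \<eta>) (Suc (length x))"

lemma xi1_in_verts: "xi1 \<in> verts q" unfolding xi1_def by (rule pref_in_verts[OF \<xi>])

lemma length_xi1: "length xi1 = 1" by (simp add: xi1_def)

lemma mem_tarc_xi1_iff: "\<eta> \<in> tarc q y \<Longrightarrow> 1 \<le> length y \<Longrightarrow> \<eta> \<in> tarc q xi1 \<longleftrightarrow> take 1 y = xi1"
  unfolding mem_tarc_iff using length_xi1 by (auto simp: take_pref min_def) (metis take_pref min_def)+

lemma level_constant_split:
  assumes A: "A \<in> {tarc q xi1, - tarc q xi1}" and N: "length x \<le> N" "1 \<le> N"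
  shows "level_constant q (\<lambda>\<eta>. indicator A \<eta> * edge_kernel W x \<eta>) N"
  unfolding level_constant_def
proof (intro ballI)
  fix y \<eta> \<eta>' assume y: "y \<in> tlevel q N" and \<eta>: "\<eta> \<in> tarc q y" "\<eta>' \<in> tarc q y"
  have "1 \<le> length y" using y N by (simp add: tlevel_def)
  then have "indicator A \<eta> = (indicator A \<eta>' :: complex)"
    using A mem_tarc_xi1_iff[OF \<eta>(1)] mem_tarc_xi1_iff[OF \<eta>(2)] by (auto simp: indicator_def)
  moreover have "level_constant q (edge_kernel W x) N"
    unfolding edge_kernel_def by (rule level_constant_confE[OF N(1)])
  then have "edge_kernel W x \<eta> = edge_kernel W x \<eta>'" using y \<eta> unfolding level_constant_def by blast
  ultimately show "indicator A \<eta> * edge_kernel W x \<eta> = indicator A \<eta>' * edge_kernel W x \<eta>'" by simp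
qed

lemma G_on_level_sum:
  assumes A: "A \<in> {tarc q xi1, - tarc q xi1}" and N: "length x \<le> N" "1 \<le> N"
  shows "G_on A x = level_sum q \<nu> (\<lambda>\<eta>. indicator A \<eta> * edge_kernel W x \<eta>) N"
proof -
  have c: "level_constant q (\<lambda>\<eta>. indicator A \<eta> * edge_kernel W x \<eta>) (max (length x) 1)"
    by (rule level_constant_split[OF A]) auto
  show ?thesis unfolding G_on_def
    using level_sum_stable[OF q1 d c, of "Suc (length x)"] level_sum_stable[OF q1 d c, of N] N by simp
qed

lemma G_on_complement_sum: "x \<in> verts q \<Longrightarrow> G_on (tarc q xi1) x + G_on (- tarc q xi1) x = edge_kernel W' x \<xi>"
proof -
  assume x: "x \<in> verts q"
  have "G_on (tarc q xi1) x + G_on (- tarc q xi1) x = level_sum q \<nu> (edge_kernel W x) (Suc (length x))"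
    unfolding G_on_def level_sum_def sum.distrib[symmetric] by (intro sum.cong) (auto simp: indicator_def)
  also have "\<dots> = dist_integral q \<nu> (edge_kernel W x)"
    by (rule dist_integral_eq_level_sum[symmetric, OF q1 d]) (unfold edge_kernel_def, rule level_constant_confE, simp)
  also have "\<dots> = edge_kernel W' x \<xi>" using hyp x by simp
  finally show ?thesis .
qed

lemma edge_kernel_W_harmonic:
  "x \<in> verts q \<Longrightarrow> \<eta> \<in> ends q \<Longrightarrow>
    (\<Sum>z\<in>nbrs q x. of_real (trans_prob q \<alpha> \<omega> x z) * edge_kernel W z \<eta>) = lam * edge_kernel W x \<eta>"
  unfolding W_def using edge_kernel_harmonic[OF q1 _ \<omega> _ a_nonzero \<alpha>0 c\<alpha> quad] by blast

lemma edge_kernel_W'_harmonic: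
  "x \<in> verts q \<Longrightarrow> (\<Sum>z\<in>nbrs q x. of_real (trans_prob q \<alpha> \<omega> x z) * edge_kernel W' z \<xi>) = lam * edge_kernel W' x \<xi>"
  unfolding W'_def using edge_kernel_harmonic[OF q1 _ \<omega> \<xi> a'_nonzero \<alpha>0 c\<alpha> quad'] by blast

lemma G_on_harmonic:
  assumes A: "A \<in> {tarc q xi1, - tarc q xi1}" and x: "x \<in> verts q"
  shows "(\<Sum>z\<in>nbrs q x. of_real (trans_prob q \<alpha> \<omega> x z) * G_on A z) = lam * G_on A x"
proof -
  define N where "N = Suc (Suc (length x))"
  have G: "G_on A z = level_sum q \<nu> (\<lambda>\<eta>. indicator A \<eta> * edge_kernel W z \<eta>) N" if "length z \<le> N" for z
    using G_on_level_sum[OF A that] by (simp add: N_def)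
  have "length z \<le> N" if "z \<in> nbrs q x" for z using that by (auto simp: N_def nbrs_def adj_def)
  then have "(\<Sum>z\<in>nbrs q x. of_real (trans_prob q \<alpha> \<omega> x z) * G_on A z) =
      (\<Sum>z\<in>nbrs q x. of_real (trans_prob q \<alpha> \<omega> x z) * level_sum q \<nu> (\<lambda>\<eta>. indicator A \<eta> * edge_kernel W z \<eta>) N)"
    using G by (intro sum.cong) auto
  also have "\<dots> = (\<Sum>y\<in>tlevel q N. (\<Sum>z\<in>nbrs q x. of_real (trans_prob q \<alpha> \<omega> x z) * edge_kernel W z (some_end q y))
        * (indicator A (some_end q y) * \<nu> (tarc q y)))"
    unfolding level_sum_def by (simp add: sum_distrib_left sum_distrib_right algebra_simps) (rule sum.swap)
  also have "\<dots> = (\<Sum>y\<in>tlevel q N. lam * edge_kernel W x (some_end q y) * (indicator A (some_end q y) * \<nu> (tarc q y)))"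
    using edge_kernel_W_harmonic[OF x] some_end_in_tarc[OF q1] by (intro sum.cong) (auto simp: tlevel_def mem_tarc_iff)
  also have "\<dots> = lam * G_on A x"
    using G[of x] by (simp add: N_def level_sum_def sum_distrib_left algebra_simps)
  finally show ?thesis .
qed

lemma pos_real_level_sum:
  assumes I: "\<And>\<eta>. I \<eta> = 0 \<or> I \<eta> = 1" and y0: "y0 \<in> tlevel q N" "I (some_end q y0) = 1"
  shows "pos_real (level_sum q \<nu> (\<lambda>\<eta>. I \<eta> * edge_kernel W x \<eta>) N)"
proof -
  define t where "t y = Re (I (some_end q y) * edge_kernel W x (some_end q y) * \<nu> (tarc q y))" for y
  have real: "I (some_end q y) * edge_kernel W x (some_end q y) * \<nu> (tarc q y) = of_real (t y)"
    and pos: "0 \<le> t y" "I (some_end q y) = 1 \<Longrightarrow> 0 < t y" if "y \<in> tlevel q N" for y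
  proof -
    obtain k where "edge_kernel W x (some_end q y) = of_real k" "0 < k"
      using pos_real_edge_kernel[OF pos_real_W] unfolding pos_real_def by blast
    moreover have "y \<in> verts q" using that by (simp add: tlevel_def)
    then obtain n where "\<nu> (tarc q y) = of_real n" "0 < n"
      using pos_real_nu unfolding pos_real_def by blast
    ultimately show "I (some_end q y) * edge_kernel W x (some_end q y) * \<nu> (tarc q y) = of_real (t y)"
      "0 \<le> t y" "I (some_end q y) = 1 \<Longrightarrow> 0 < t y"
      using I[of "some_end q y"] by (auto simp: t_def)
  qed
  have "level_sum q \<nu> (\<lambda>\<eta>. I \<eta> * edge_kernel W x \<eta>) N = of_real (\<Sum>y\<in>tlevel q N. t y)"
    unfolding level_sum_def of_real_sum using real by (intro sum.cong) auto
  moreover have "(\<Sum>y\<in>tlevel q N. t y) > 0"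
    using sum_pos2[OF finite_tlevel y0(1)] pos y0 by blast
  ultimately show ?thesis unfolding pos_real_def by blast
qed

lemma exists_level_vertex:
  assumes A: "A \<in> {tarc q xi1, - tarc q xi1}" and N: "1 \<le> N"
  shows "\<exists>y\<in>tlevel q N. some_end q y \<in> A"
proof -
  define b where "b = (if A = tarc q xi1 then \<xi> 0 else if \<xi> 0 = 0 then 1 else 0)"
  have bv: "[b] \<in> verts q" using snoc_in_verts_iff[of "[]" b q] q1 \<xi> by (auto simp: b_def ends_def)
  define \<eta> where "\<eta> = some_end q [b]"
  have \<eta>: "\<eta> \<in> ends q" "take 1 (pref \<eta> N) = [b]"
    using some_end_in_tarc[OF q1 bv] N by (auto simp: \<eta>_def mem_tarc_iff take_pref min_def)
  have y: "pref \<eta> N \<in> tlevel q N" using pref_in_verts[OF \<eta>(1)] by (simp add: tlevel_def)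
  have "some_end q (pref \<eta> N) \<in> tarc q xi1 \<longleftrightarrow> A = tarc q xi1"
    using mem_tarc_xi1_iff[OF some_end_in_tarc[OF q1 pref_in_verts[OF \<eta>(1)]]] \<eta>(2) N A
    by (auto simp: b_def xi1_def pref_def split: if_splits)
  then show ?thesis using y A by auto
qed

lemma pos_real_G_on:
  assumes A: "A \<in> {tarc q xi1, - tarc q xi1}"
  shows "pos_real (G_on A x)"
proof -
  obtain y where "y \<in> tlevel q (Suc (length x))" "some_end q y \<in> A"
    using exists_level_vertex[OF A, of "Suc (length x)"] by auto
  then show ?thesis unfolding G_on_def by (intro pos_real_level_sum) (auto simp: indicator_def)
qed

lemma G_on_xi1:
  "G_on (tarc q xi1) xi1 = G_on (tarc q xi1) [] / W [] xi1"
  "G_on (- tarc q xi1) xi1 = W xi1 [] * G_on (- tarc q xi1) []"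
proof -
  have xi1: "xi1 = [\<xi> 0]" by (simp add: xi1_def pref_def)
  have K: "edge_kernel W xi1 (some_end q y) = (if y = xi1 then 1 / W [] xi1 else W xi1 [])"
    and mem: "some_end q y \<in> tarc q xi1 \<longleftrightarrow> y = xi1" if y: "y \<in> tlevel q 1" for y
  proof -
    have yv: "y \<in> verts q" and yl: "length y = 1" using y by (auto simp: tlevel_def)
    have "y \<noteq> xi1 \<Longrightarrow> lcp xi1 y = []" using length_lcp_less[of xi1 y] length_xi1 yl by simp
    then show "edge_kernel W xi1 (some_end q y) = (if y = xi1 then 1 / W [] xi1 else W xi1 [])"
      using confE_some_end[OF q1 yv, of xi1] length_xi1 yl geo_w_root_snoc[of W "[]" "\<xi> 0"]
        geo_w_snoc_parent[of W "[]" "\<xi> 0"]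
      by (auto simp: edge_kernel_def xi1)
    show "some_end q y \<in> tarc q xi1 \<longleftrightarrow> y = xi1"
      using mem_tarc_xi1_iff[OF some_end_in_tarc[OF q1 yv]] yl by auto
  qed
  have G: "G_on A xi1 = level_sum q \<nu> (\<lambda>\<eta>. indicator A \<eta> * edge_kernel W xi1 \<eta>) 1"
    "G_on A [] = level_sum q \<nu> (\<lambda>\<eta>. indicator A \<eta>) 1" if "A \<in> {tarc q xi1, - tarc q xi1}" for A
    using G_on_level_sum[OF that, of xi1 1] G_on_level_sum[OF that, of "[]" 1] length_xi1 by simp_all
  show "G_on (tarc q xi1) xi1 = G_on (tarc q xi1) [] / W [] xi1"
    by (simp add: G level_sum_def K mem indicator_def sum_divide_distrib cong: sum.cong)
      (auto intro!: sum.cong)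
  show "G_on (- tarc q xi1) xi1 = W xi1 [] * G_on (- tarc q xi1) []"
    by (simp add: G level_sum_def K mem indicator_def sum_distrib_left cong: sum.cong)
      (auto intro!: sum.cong)
qed

text \<open>The two parts are not proportional: their ratios at \<open>\<xi>\<^sub>1\<close> and at the root differ, since
  \<open>W(\<xi>\<^sub>1, o) W(o, \<xi>\<^sub>1) = r / q \<noteq> 1\<close>.\<close>

lemma G_on_not_proportional:
  "G_on (tarc q xi1) xi1 / G_on (tarc q xi1) [] \<noteq> G_on (- tarc q xi1) xi1 / G_on (- tarc q xi1) []"
proof
  assume e: "G_on (tarc q xi1) xi1 / G_on (tarc q xi1) [] = G_on (- tarc q xi1) xi1 / G_on (- tarc q xi1) []"
  have nz: "G_on A [] \<noteq> 0" if "A \<in> {tarc q xi1, - tarc q xi1}" for A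
    using pos_real_G_on[OF that, of "[]"] unfolding pos_real_def by auto
  have "1 / W [] xi1 = W xi1 []" using e nz W_nonzero by (simp add: G_on_xi1)
  then have "W xi1 [] * W [] xi1 = 1" using W_nonzero by (simp add: field_simps)
  moreover have "W xi1 [] * W [] xi1 = r / of_nat q"
    using W_edge_product[of "[]" "\<xi> 0"] c_a_a_eq by (simp add: xi1_def pref_def)
  ultimately have "norm r = real q" by (simp add: field_simps)
  then show False using rlt q1 by simp
qed

lemma HsetI:
  assumes pos: "\<And>x. x \<in> verts q \<Longrightarrow> pos_real (G x)" and G0: "G [] = 1"
    and harm: "\<And>x. x \<in> verts q \<Longrightarrow> (\<Sum>z\<in>nbrs q x. of_real (trans_prob q \<alpha> \<omega> x z) * G z) = lam * G x"
  shows "(\<lambda>x. if x \<in> verts q then Re (G x) else 0) \<in> Hset q \<alpha> \<omega> (Re lam)"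
  unfolding Hset_def
proof (intro CollectI conjI ballI allI impI)
  fix x assume x: "x \<in> verts q"
  show "0 < (if x \<in> verts q then Re (G x) else 0)" using pos_real_Re[OF pos[OF x]] x by simp
  have "(\<Sum>z\<in>nbrs q x. trans_prob q \<alpha> \<omega> x z * Re (G z)) = Re lam * Re (G x)"
  proof -
    have "Re (lam * G x) = Re lam * Re (G x)" by (subst lam_real) simp
    then show ?thesis using arg_cong[OF harm[OF x], of Re] by (simp add: Re_sum)
  qed
  moreover have "(\<Sum>z\<in>nbrs q x. trans_prob q \<alpha> \<omega> x z * (if z \<in> verts q then Re (G z) else 0)) =
      (\<Sum>z\<in>nbrs q x. trans_prob q \<alpha> \<omega> x z * Re (G z))"
    by (intro sum.cong) (auto simp: nbrs_in_verts)
  ultimately show "(\<Sum>y\<in>nbrs q x. trans_prob q \<alpha> \<omega> x y * (if y \<in> verts q then Re (G y) else 0)) =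
      Re lam * (if x \<in> verts q then Re (G x) else 0)" using x by simp
qed (use G0 in auto)

lemma normalized_G_on_in_Hset:
  assumes A: "A \<in> {tarc q xi1, - tarc q xi1}"
  shows "(\<lambda>x. if x \<in> verts q then Re (G_on A x / G_on A []) else 0) \<in> Hset q \<alpha> \<omega> (Re lam)"
proof (rule HsetI)
  show "pos_real (G_on A x / G_on A [])" for x by (intro pos_real_div pos_real_G_on A)
  then show "G_on A [] / G_on A [] = 1" unfolding pos_real_def by auto
  show "(\<Sum>z\<in>nbrs q x. of_real (trans_prob q \<alpha> \<omega> x z) * (G_on A z / G_on A [])) = lam * (G_on A x / G_on A [])"
    if "x \<in> verts q" for x
    using G_on_harmonic[OF A that] by (simp add: sum_divide_distrib[symmetric])
qed

lemma not_minimal: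
  "\<exists>h\<in>Hset q \<alpha> \<omega> (Re lam). (\<forall>x\<in>verts q. edge_kernel W' x \<xi> = of_real (h x)) \<and>
     \<not> minimal_in (Hset q \<alpha> \<omega> (Re lam)) h"
proof -
  define h where "h x = (if x \<in> verts q then Re (edge_kernel W' x \<xi>) else 0)" for x
  define h1 where "h1 x = (if x \<in> verts q then Re (G_on (tarc q xi1) x / G_on (tarc q xi1) []) else 0)" for x
  define h2 where "h2 x = (if x \<in> verts q then Re (G_on (- tarc q xi1) x / G_on (- tarc q xi1) []) else 0)" for x
  obtain t where t: "G_on (tarc q xi1) [] = of_real t" "0 < t"
    using pos_real_G_on[of "tarc q xi1" "[]"] unfolding pos_real_def by auto
  obtain s where s: "G_on (- tarc q xi1) [] = of_real s" "0 < s"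
    using pos_real_G_on[of "- tarc q xi1" "[]"] unfolding pos_real_def by auto
  have ts: "t + s = 1" using G_on_complement_sum[of "[]"] t s by (metis of_real_add of_real_eq_1_iff Nil_in_verts edge_kernel_Nil)
  have hH: "h \<in> Hset q \<alpha> \<omega> (Re lam)" unfolding h_def[abs_def]
    by (rule HsetI) (use pos_real_edge_kernel[OF pos_real_W'] edge_kernel_W'_harmonic in auto)
  have hK: "\<forall>x\<in>verts q. edge_kernel W' x \<xi> = of_real (h x)"
    using pos_real_Re[OF pos_real_edge_kernel[OF pos_real_W']] by (simp add: h_def)
  have "h = (\<lambda>x. t * h1 x + (1 - t) * h2 x)"
  proof
    fix x
    show "h x = t * h1 x + (1 - t) * h2 x"
    proof (cases "x \<in> verts q")
      case True
      have "Re (edge_kernel W' x \<xi>) = Re (G_on (tarc q xi1) x) + Re (G_on (- tarc q xi1) x)"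
        using G_on_complement_sum[OF True] by (metis plus_complex.sel(1))
      moreover have "1 - t = s" using ts by simp
      ultimately show ?thesis using True t s by (simp add: h_def h1_def h2_def Re_divide_of_real)
    qed (simp add: h_def h1_def h2_def)
  qed
  moreover have "h1 \<noteq> h2"
  proof
    assume "h1 = h2"
    then have "h1 xi1 = h2 xi1" by simp
    then have "Re (G_on (tarc q xi1) xi1 / G_on (tarc q xi1) []) = Re (G_on (- tarc q xi1) xi1 / G_on (- tarc q xi1) [])"
      using xi1_in_verts by (simp add: h1_def h2_def)
    moreover have "pos_real (G_on A xi1 / G_on A [])" if "A \<in> {tarc q xi1, - tarc q xi1}" for A
      using that by (intro pos_real_div pos_real_G_on)
    ultimately show False using G_on_not_proportional pos_real_Re by (metis insertCI)
  qed
  moreover have "h1 \<in> Hset q \<alpha> \<omega> (Re lam)" "h2 \<in> Hset q \<alpha> \<omega> (Re lam)"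
    unfolding h1_def[abs_def] h2_def[abs_def] by (auto intro: normalized_G_on_in_Hset)
  ultimately have "\<not> minimal_in (Hset q \<alpha> \<omega> (Re lam)) h"
    unfolding minimal_in_def using t(2) s(2) ts by fastforce
  then show ?thesis using hH hK by blast
qed

end

context spectral_parameter
begin

lemma norm_Fm_div_Fmt_less_1: "norm (Fm \<alpha> lam / Fmt \<alpha> lam) < 1"
  using norm_Fm_less_norm_Fmt Fmt_nonzero by (simp add: norm_divide)

lemma contracting_representation_Fm_Fmt:
  assumes "q \<ge> 1" "\<xi> \<in> ends q" "distribution q \<nu>"
    and "\<forall>x\<in>verts q. Kkert q \<alpha> \<omega> lam x \<xi> = dist_integral q \<nu> (Kker q \<alpha> \<omega> lam x)"
  shows "contracting_representation q \<omega> (up_ratio q \<alpha>) (Fm \<alpha> lam) (Fmt \<alpha> lam) \<nu> \<xi>"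
  using represented_kernel_Fm_Fmt[OF assms] norm_Fm_div_Fmt_less_1
    kernel_pair.r_def[OF kernel_pair_Fm_Fmt[OF assms(1)]]
  by (simp add: contracting_representation_def contracting_representation_axioms_def)

lemma nu_extends_to_borel:
  assumes "q \<ge> 1" "\<xi> \<in> ends q" "distribution q \<nu>"
    and "\<forall>x\<in>verts q. Kkert q \<alpha> \<omega> lam x \<xi> = dist_integral q \<nu> (Kker q \<alpha> \<omega> lam x)"
  shows "extends_to_borel q \<nu>"
  using contracting_representation.nu_extends_to_borel[OF contracting_representation_Fm_Fmt[OF assms]] .

lemma nut_not_extends_to_borel:
  assumes q: "q \<ge> 2" and "\<xi> \<in> ends q" "distribution q \<nu>"
    and "\<forall>x\<in>verts q. Kker q \<alpha> \<omega> lam x \<xi> = dist_integral q \<nu> (Kkert q \<alpha> \<omega> lam x)"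
  shows "\<not> extends_to_borel q \<nu>"
proof -
  have q1: "q \<ge> 1" using q by simp
  interpret represented_kernel q \<omega> "up_ratio q \<alpha>" "Fmt \<alpha> lam" "Fm \<alpha> lam" \<nu> \<xi>
    using represented_kernel_Fmt_Fm[OF q1 assms(2-)] .
  have "1 < norm r"
    using norm_Fm_less_norm_Fmt Fm_nonzero by (simp add: r_def norm_divide)
  then show ?thesis by (rule not_extends_to_borel[OF q])
qed

lemma nu_real_parameter:
  assumes q: "q \<ge> 2" and \<omega>: "\<omega> \<in> ends q" and "\<xi> \<in> ends q" "distribution q \<nu>"
    and hyp: "\<forall>x\<in>verts q. Kkert q \<alpha> \<omega> lam x \<xi> = dist_integral q \<nu> (Kker q \<alpha> \<omega> lam x)"
    and lam: "lam \<in> \<real>" "Re lam > \<rho>"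
  shows "(\<exists>M. prob_space M \<and> space M = ends q \<and> sets M = sets (bdry_borel q) \<and>
           (\<forall>A\<in>bdry_alg q. \<nu> A = complex_of_real (measure M A)) \<and>
           (\<forall>U. openin (bdry_top q) U \<and> U \<noteq> {} \<longrightarrow> measure M U > 0)) \<and>
      (\<exists>h\<in>Hset q \<alpha> \<omega> (Re lam). (\<forall>x\<in>verts q. Kkert q \<alpha> \<omega> lam x \<xi> = complex_of_real (h x)) \<and>
           \<not> minimal_in (Hset q \<alpha> \<omega> (Re lam)) h)"
proof -
  have q1: "q \<ge> 1" using q by simp
  interpret positive_representation q \<omega> "up_ratio q \<alpha>" "Fm \<alpha> lam" "Fmt \<alpha> lam" \<nu> \<xi> \<alpha> lam
    using contracting_representation_Fm_Fmt[OF q1 assms(3-5)] q \<omega> \<alpha>0 \<alpha>1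
      one_minus_mult_up_ratio Fm_quadratic Fmt_quadratic pos_real_Fm_Fmt[OF lam]
    by (simp add: positive_representation_def positive_representation_axioms_def)
  have "Kkert q \<alpha> \<omega> lam = edge_kernel W'" by (simp add: Kkert_eq_edge_kernel W'_def Fpt_eq_up_ratio)
  then show ?thesis using nu_prob_measure_full_support not_minimal by simp
qed

end

theorem theorem4p5:
  fixes q :: nat and \<alpha> :: real and \<omega> \<xi> :: "nat \<Rightarrow> nat" and lam :: complex
    and \<nu> \<nu>t :: "(nat \<Rightarrow> nat) set \<Rightarrow> complex"
  defines "\<rho> \<equiv> 2 * sqrt (\<alpha> * (1 - \<alpha>))"
  defines "lam0 \<equiv> (real q + 1) / (2 * sqrt (real q)) * \<rho>"
  assumes q: "q \<ge> 2"
    and \<alpha>: "0 < \<alpha>" "\<alpha> < 1"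
    and \<omega>: "\<omega> \<in> ends q"
    and \<xi>: "\<xi> \<in> ends q"
    and lam: "lam \<notin> complex_of_real ` {-\<rho>..\<rho>}" "lam \<noteq> complex_of_real lam0"
    and \<nu>: "strong_distribution q \<nu>"
      "\<forall>x\<in>verts q. Kkert q \<alpha> \<omega> lam x \<xi> = dist_integral q \<nu> (Kker q \<alpha> \<omega> lam x)"
    and \<nu>t: "strong_distribution q \<nu>t"
      "\<forall>x\<in>verts q. Kker q \<alpha> \<omega> lam x \<xi> = dist_integral q \<nu>t (Kkert q \<alpha> \<omega> lam x)"
  shows "extends_to_borel q \<nu> \<and> \<not> extends_to_borel q \<nu>t \<and>
    (lam \<in> \<real> \<and> Re lam > \<rho> \<longrightarrow>
      (\<exists>M. prob_space M \<and> space M = ends q \<and> sets M = sets (bdry_borel q) \<and>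
           (\<forall>A\<in>bdry_alg q. \<nu> A = complex_of_real (measure M A)) \<and>
           (\<forall>U. openin (bdry_top q) U \<and> U \<noteq> {} \<longrightarrow> measure M U > 0)) \<and>
      (\<exists>h\<in>Hset q \<alpha> \<omega> (Re lam). (\<forall>x\<in>verts q. Kkert q \<alpha> \<omega> lam x \<xi> = complex_of_real (h x)) \<and>
           \<not> minimal_in (Hset q \<alpha> \<omega> (Re lam)) h))"
proof -
  interpret spectral_parameter \<alpha> \<rho> lam
    using \<alpha> lam(1) by unfold_locales (simp_all add: \<rho>_def)
  have d: "distribution q \<nu>" "distribution q \<nu>t"
    using \<nu>(1) \<nu>t(1) by (simp_all add: strong_distribution_def)
  show ?thesis
    using nu_extends_to_borel[OF _ \<xi> d(1) \<nu>(2)] nut_not_extends_to_borel[OF q \<xi> d(2) \<nu>t(2)]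
      nu_real_parameter[OF q \<omega> \<xi> d(1) \<nu>(2)] q by auto
qed

end
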